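(* Assume (A1), (A3), (A4), that the propensity models are correctly specified with true parameter $\alpha_0$, and that the working confounding functions are correct ($c_k(y,\bar a_K,\bar l_k;\gamma_k)=c_k(y,\bar a_K,\bar l_k)$ for all $k$). Then $E[U^{\mathrm{BC\text{-}IPW}}(O;\theta_{q0},\alpha_0)]=0$.
   Context: Setting (sequential ignorability is not assumed): $O=(L_1,A_1,\dots,L_K,A_K,Y)$, $A_k\in\{0,1\}$, $\bar A_k,\bar L_k$ histories, $\bar{\mathbb A}_K=\{0,1\}^K$; $Y_{\bar a_K}$ potential outcome, continuous on $[y_{\min},y_{\max}]$. $Z\subset L_1$; $h(\bar a_K,Z;\theta_q)$ smooth; $d=\rho(\bar a_K,Z)\partial h/\partial\theta_q$; $\theta_{q0}$ solves $E[\sum_{\bar a_K}d(\bar a_K,Z;\theta_q)\{F_{Y_{\bar a_K}|Z}(h(\bar a_K,Z;\theta_q)|Z)-q\}]=0$. (A1) $Y_{\bar a_K}=Y$ if $\bar A_K=\bar a_K$; (A3) positivity of $f_{A_k|\bar A_{k-1},\bar L_k}$; (A4) unique $q$-th quantile of $F_{Y_{\bar a_K}|Z}$. Propensity models $\pi_k(\bar a_k,\bar l_k;\alpha_k)$ (correct: equal $f_{A_k|\bar A_{k-1},\bar L_k}$ at $\alpha_{k,0}$), $\bar\pi_K=\prod_k\pi_k$. Confounding function $c_k(y,\bar a_K,\bar l_k)=F_{Y_{\bar a_K}|\bar A_k,\bar L_k}(y|(a_k,\bar a_{k-1}),\bar l_k)-F_{Y_{\bar a_K}|\bar A_k,\bar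 L_k}(y|(1-a_k,\bar a_{k-1}),\bar l_k)$, working version $c_k(\cdot;\gamma_k)$ with known $\gamma_k$, $c^*_k(y,\bar a_K,\bar l_k;\gamma_k,\alpha_k)=c_k(y,\bar a_K,\bar l_k;\gamma_k)\pi_k((1-a_k,\bar a_{k-1}),\bar l_k;\alpha_k)$. $U^{\mathrm{BC\text{-}IPW}}(O;\theta_q,\alpha)=\frac{d(\bar A_K,Z;\theta_q)}{\bar\pi_K(\bar A_K,\bar L_K;\alpha)}\{\mathbb I(Y\le h(\bar A_K,Z;\theta_q))-\sum_{k=1}^Kc^*_k(h(\bar A_K,Z;\theta_q),\bar A_K,\bar L_k;\gamma_k,\alpha_k)-q\}$. *)

theory Defs
  imports "HOL-Probability.Probability"
begin

text \<open>Treatment histories are encoded as functions nat => bool that are False outside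
  the index range; the K-fold treatment regimes {0,1}^K are exactly those a with a i = False
  for i outside {1..K}.\<close>

definition regimes :: "nat \<Rightarrow> (nat \<Rightarrow> bool) set" where
  "regimes K = {a. \<forall>i. a i \<longrightarrow> i \<in> {1..K}}"

definition trunc :: "nat \<Rightarrow> (nat \<Rightarrow> bool) \<Rightarrow> (nat \<Rightarrow> bool)" where
  "trunc k a = (\<lambda>i. i \<in> {1..k} \<and> a i)"

definition abar :: "(nat \<Rightarrow> 'w \<Rightarrow> bool) \<Rightarrow> nat \<Rightarrow> 'w \<Rightarrow> (nat \<Rightarrow> bool)" where
  "abar A k \<omega> = (\<lambda>i. i \<in> {1..k} \<and> A i \<omega>)"

definition lbar :: "(nat \<Rightarrow> 'w \<Rightarrow> 'l) \<Rightarrow> nat \<Rightarrow> 'w \<Rightarrow> (nat \<Rightarrow> 'l)" where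
  "lbar L k \<omega> = restrict (\<lambda>i. L i \<omega>) {1..k}"

definition hist_space :: "'l measure \<Rightarrow> nat \<Rightarrow> ((nat \<Rightarrow> bool) \<times> (nat \<Rightarrow> 'l)) measure" where
  "hist_space N k = count_space UNIV \<Otimes>\<^sub>M (\<Pi>\<^sub>M i\<in>{1..k}. N)"

text \<open>f(X) is a version of the conditional probability P(P | X), i.e. f is a function of
  the conditioning value with E[1_P 1_{X in B}] = E[f(X) 1_{X in B}] for all measurable B.\<close>
definition cond_version ::
  "'w measure \<Rightarrow> 'x measure \<Rightarrow> ('w \<Rightarrow> 'x) \<Rightarrow> ('w \<Rightarrow> bool) \<Rightarrow> ('x \<Rightarrow> real) \<Rightarrow> bool" where
  "cond_version M S X P f \<longleftrightarrow>
     X \<in> measurable M S \<and> {\<omega>\<in>space M. P \<omega>} \<in> sets M \<and> f \<in> borel_measurable S \<and>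
     integrable M (\<lambda>\<omega>. f (X \<omega>)) \<and>
     (\<forall>B\<in>sets S. measure M ({\<omega>\<in>space M. P \<omega>} \<inter> (X -` B \<inter> space M))
                 = (\<integral>\<omega>. f (X \<omega>) * indicator (X -` B \<inter> space M) \<omega> \<partial>M))"

text \<open>G is a (regular) conditional CDF of V given X: G y x = F_{V|X}(y|x).\<close>
definition cond_cdf ::
  "'w measure \<Rightarrow> 'x measure \<Rightarrow> ('w \<Rightarrow> 'x) \<Rightarrow> ('w \<Rightarrow> real) \<Rightarrow> (real \<Rightarrow> 'x \<Rightarrow> real) \<Rightarrow> bool" where
  "cond_cdf M S X V G \<longleftrightarrow>
     (\<forall>y. cond_version M S X (\<lambda>\<omega>. V \<omega> \<le> y) (G y)) \<and>
     (\<forall>x\<in>space S. mono (\<lambda>y. G y x) \<and> (\<forall>y. 0 \<le> G y x \<and> G y x \<le> 1) \<and>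
        (\<forall>y. continuous (at_right y) (\<lambda>t. G t x)) \<and>
        ((\<lambda>t. G t x) \<longlongrightarrow> 0) at_bot \<and> ((\<lambda>t. G t x) \<longlongrightarrow> 1) at_top)"

text \<open>True confounding function c_k(y, a_K, l_k) built from the conditional CDFs
  Fk a k y (a_k, l_k) = F_{Y_a | A_k, L_k}(y | a_k, l_k).\<close>
definition conf_true ::
  "((nat \<Rightarrow> bool) \<Rightarrow> nat \<Rightarrow> real \<Rightarrow> ((nat \<Rightarrow> bool) \<times> (nat \<Rightarrow> 'l)) \<Rightarrow> real)
   \<Rightarrow> nat \<Rightarrow> real \<Rightarrow> (nat \<Rightarrow> bool) \<Rightarrow> (nat \<Rightarrow> 'l) \<Rightarrow> real" where
  "conf_true Fk k y a l =
     Fk a k y (trunc k a, l) - Fk a k y ((trunc k a)(k := \<not> a k), l)"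

definition U_BCIPW ::
  "nat \<Rightarrow> (nat \<Rightarrow> 'w \<Rightarrow> bool) \<Rightarrow> (nat \<Rightarrow> 'w \<Rightarrow> 'l) \<Rightarrow> ('w \<Rightarrow> real) \<Rightarrow> ('l \<Rightarrow> 'z)
   \<Rightarrow> ((nat \<Rightarrow> bool) \<Rightarrow> 'z \<Rightarrow> 'th \<Rightarrow> real)
   \<Rightarrow> ((nat \<Rightarrow> bool) \<Rightarrow> 'z \<Rightarrow> 'th \<Rightarrow> 'v::real_vector)
   \<Rightarrow> (nat \<Rightarrow> (nat \<Rightarrow> bool) \<Rightarrow> (nat \<Rightarrow> 'l) \<Rightarrow> 'p \<Rightarrow> real)
   \<Rightarrow> (nat \<Rightarrow> real \<Rightarrow> (nat \<Rightarrow> bool) \<Rightarrow> (nat \<Rightarrow> 'l) \<Rightarrow> 'g \<Rightarrow> real)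
   \<Rightarrow> (nat \<Rightarrow> 'g) \<Rightarrow> real \<Rightarrow> 'th \<Rightarrow> (nat \<Rightarrow> 'p) \<Rightarrow> 'w \<Rightarrow> 'v" where
  "U_BCIPW K A L Y zf h d \<pi> c \<gamma> q \<theta> \<alpha> \<omega> =
    (let aK = abar A K \<omega>; z = zf (L 1 \<omega>); y = h aK z \<theta>;
         pibar = (\<Prod>k\<in>{1..K}. \<pi> k (abar A k \<omega>) (lbar L k \<omega>) (\<alpha> k));
         cstar = (\<Sum>k\<in>{1..K}. c k y aK (lbar L k \<omega>) (\<gamma> k)
                      * \<pi> k ((abar A k \<omega>)(k := \<not> A k \<omega>)) (lbar L k \<omega>) (\<alpha> k))
     in (((if Y \<omega> \<le> y then 1 else 0) - cstar - q) / pibar) *\<^sub>R d aK z \<theta>)"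

end

(*
  Fix a regime a, let W_j = 1{(A_1..A_j) = (a_1..a_j)} / prod_{i<=j} p_i(a_i | a_1..a_(i-1), L_1..L_i)
  be its inverse probability weight up to time j, and let g = d(a, Z; theta_q0).  Since p_k is
  the conditional law of A_k given the past, W_(k-1) may be replaced by W_k in the expectation of
  any function of (A_1..A_(k-1), L_1..L_k); positivity makes the propensity cancel.  Conditioning
  1{Y_a <= h} on (A_1..A_k, L_1..L_k) replaces it by F_k at the observed history.  Where W_(k-1)
  is nonzero, that history deviates from the regime only if A_k = 1 - a_k, and then F_k drops by
  exactly the confounding function c_k.  Hence removing one treatment indicator costs
  E[W_k c*_k g], and telescoping from k = K down to 0 gives
    E[W_K (1{Y_a <= h} - sum_k c*_k - q) g] = E[(F_{Y_a|Z}(h | Z) - q) g].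
  By consistency and the correctly specified propensity and confounding models, U is the sum of
  W_K (1{Y_a <= h} - sum_k c*_k - q) g over all regimes a, so E[U] is the left-hand side of the
  equation defining theta_q0.  Conditional distribution functions are evaluated at the random threshold
  h(a, Z; theta_q0) by approximating it from above with finitely-valued dyadic thresholds and
  using right continuity.
*)

theory Submission
  imports Defs
begin

section \<open>Versions of conditional probabilities\<close>

lemma AE_nonneg_if_integral_on_negative_set_nonneg:
  fixes g :: "'a \<Rightarrow> real"
  assumes g: "integrable M g"
    and neg: "0 \<le> (\<integral>\<omega>. g \<omega> * indicator {\<omega>\<in>space M. g \<omega> < 0} \<omega> \<partial>M)"
  shows "AE \<omega> in M. 0 \<le> g \<omega>"
proof -
  let ?f = "\<lambda>\<omega>. - (g \<omega> * indicator {\<omega>\<in>space M. g \<omega> < 0} \<omega>)"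
  have f_nonneg: "AE \<omega> in M. 0 \<le> ?f \<omega>"
    by (intro AE_I2) (auto simp: indicator_def mult_le_0_iff)
  have "integrable M ?f"
    using g by (intro integrable_minus integrable_real_mult_indicator) auto
  moreover have "integral\<^sup>L M ?f = 0"
    using neg integral_nonneg_AE[OF f_nonneg] by simp
  ultimately have "AE \<omega> in M. ?f \<omega> = 0"
    using integral_nonneg_eq_0_iff_AE[OF _ f_nonneg] by blast
  then show ?thesis
    using AE_space by eventually_elim (auto simp: indicator_def split: if_splits)
qed

lemma cond_versionD:
  assumes "cond_version M S X P p"
  shows "X \<in> M \<rightarrow>\<^sub>M S" "{\<omega>\<in>space M. P \<omega>} \<in> sets M" "p \<in> borel_measurable S"
    "integrable M (\<lambda>\<omega>. p (X \<omega>))"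
    "\<And>B. B \<in> sets S \<Longrightarrow> measure M ({\<omega>\<in>space M. P \<omega>} \<inter> (X -` B \<inter> space M))
                 = (\<integral>\<omega>. p (X \<omega>) * indicator (X -` B \<inter> space M) \<omega> \<partial>M)"
  using assms unfolding cond_version_def by auto

lemma cond_version_AE_bounds:
  assumes "prob_space M" and cv: "cond_version M S X P p"
  shows "AE \<omega> in M. 0 \<le> p (X \<omega>) \<and> p (X \<omega>) \<le> 1"
proof -
  interpret prob_space M by fact
  note cv' = cond_versionD[OF cv]
  have preimage: "indicator {\<omega>\<in>space M. R (p (X \<omega>))} \<omega>
      = (indicator (X -` {x\<in>space S. R (p x)} \<inter> space M) \<omega> :: real)" for R \<omega>
    using measurable_space[OF cv'(1)] by (auto simp: indicator_def)
  have "(\<integral>\<omega>. p (X \<omega>) * indicator {\<omega>\<in>space M. p (X \<omega>) < 0} \<omega> \<partial>M)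
      = measure M ({\<omega>\<in>space M. P \<omega>} \<inter> (X -` {x\<in>space S. p x < 0} \<inter> space M))"
    unfolding preimage[of "\<lambda>t. t < 0"] by (rule cv'(5)[symmetric]) (use cv'(3) in measurable)
  then have lower: "AE \<omega> in M. 0 \<le> p (X \<omega>)"
    by (intro AE_nonneg_if_integral_on_negative_set_nonneg[OF cv'(4)]) simp
  define B where "B = X -` {x\<in>space S. 1 < p x} \<inter> space M"
  have B: "B \<in> sets M" unfolding B_def using cv'(1,3) by measurable
  have "measure M ({\<omega>\<in>space M. P \<omega>} \<inter> B) \<le> measure M B"
    using B by (intro finite_measure_mono) auto
  moreover have "measure M ({\<omega>\<in>space M. P \<omega>} \<inter> B) = (\<integral>\<omega>. p (X \<omega>) * indicator B \<omega> \<partial>M)"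
    unfolding B_def by (rule cv'(5)) (use cv'(3) in measurable)
  ultimately have "(\<integral>\<omega>. p (X \<omega>) * indicator B \<omega> \<partial>M) \<le> (\<integral>\<omega>. indicator B \<omega> \<partial>M)"
    using B by simp
  moreover have "(\<integral>\<omega>. (1 - p (X \<omega>)) * indicator B \<omega> \<partial>M)
      = (\<integral>\<omega>. indicator B \<omega> \<partial>M) - (\<integral>\<omega>. p (X \<omega>) * indicator B \<omega> \<partial>M)"
    unfolding left_diff_distrib mult_1 using B cv'(4)
    by (intro Bochner_Integration.integral_diff integrable_real_mult_indicator
        integrable_real_indicator) (auto simp: emeasure_eq_measure)
  ultimately have "0 \<le> (\<integral>\<omega>. (1 - p (X \<omega>)) * indicator {\<omega>\<in>space M. 1 - p (X \<omega>) < 0} \<omega> \<partial>M)"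
    using preimage[of "\<lambda>t. 1 < t"] unfolding B_def by simp
  then have upper: "AE \<omega> in M. 0 \<le> 1 - p (X \<omega>)"
    using cv'(4) by (intro AE_nonneg_if_integral_on_negative_set_nonneg) auto
  show ?thesis using lower upper by eventually_elim simp
qed

lemma cond_version_distr_density:
  assumes "prob_space M" and cv: "cond_version M S X P p"
  shows "distr (density M (\<lambda>\<omega>. ennreal (indicator {\<omega>\<in>space M. P \<omega>} \<omega>))) S X
       = distr (density M (\<lambda>\<omega>. ennreal (p (X \<omega>)))) S X"
proof (rule measure_eqI)
  interpret prob_space M by fact
  note cv' = cond_versionD[OF cv]
  have pX: "(\<lambda>\<omega>. p (X \<omega>)) \<in> borel_measurable M" using cv'(1,3) by measurable
  fix B assume "B \<in> sets (distr (density M (\<lambda>\<omega>. ennreal (indicator {\<omega>\<in>space M. P \<omega>} \<omega>))) S X)"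
  then have B: "B \<in> sets S" by simp
  have XB: "X -` B \<inter> space M \<in> sets M" using B cv'(1) by measurable
  have "emeasure (distr (density M (\<lambda>\<omega>. ennreal (indicator {\<omega>\<in>space M. P \<omega>} \<omega>))) S X) B
      = (\<integral>\<^sup>+\<omega>. ennreal (indicator {\<omega>\<in>space M. P \<omega>} \<omega>) * indicator (X -` B \<inter> space M) \<omega> \<partial>M)"
    using cv'(1,2) B XB by (simp add: emeasure_distr emeasure_density)
  also have "\<dots> = (\<integral>\<^sup>+\<omega>. indicator ({\<omega>\<in>space M. P \<omega>} \<inter> (X -` B \<inter> space M)) \<omega> \<partial>M)"
    by (intro nn_integral_cong) (auto simp: indicator_def)
  also have "\<dots> = ennreal (measure M ({\<omega>\<in>space M. P \<omega>} \<inter> (X -` B \<inter> space M)))"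
    using XB cv'(2) by (simp add: emeasure_eq_measure)
  also have "\<dots> = ennreal (\<integral>\<omega>. p (X \<omega>) * indicator (X -` B \<inter> space M) \<omega> \<partial>M)"
    by (simp add: cv'(5)[OF B])
  also have "\<dots> = (\<integral>\<^sup>+\<omega>. ennreal (p (X \<omega>) * indicator (X -` B \<inter> space M) \<omega>) \<partial>M)"
    using XB cv'(4) cond_version_AE_bounds[OF \<open>prob_space M\<close> cv]
    by (intro nn_integral_eq_integral[symmetric] integrable_real_mult_indicator)
       (auto elim!: eventually_mono simp: indicator_def)
  also have "\<dots> = (\<integral>\<^sup>+\<omega>. ennreal (p (X \<omega>)) * indicator (X -` B \<inter> space M) \<omega> \<partial>M)"
    by (intro nn_integral_cong) (auto simp: indicator_def)
  also have "\<dots> = emeasure (distr (density M (\<lambda>\<omega>. ennreal (p (X \<omega>)))) S X) B"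
    using cv'(1) pX B XB by (simp add: emeasure_distr emeasure_density)
  finally show "emeasure (distr (density M (\<lambda>\<omega>. ennreal (indicator {\<omega>\<in>space M. P \<omega>} \<omega>))) S X) B
      = emeasure (distr (density M (\<lambda>\<omega>. ennreal (p (X \<omega>)))) S X) B" .
qed simp

lemma cond_version_integral:
  fixes f :: "'x \<Rightarrow> 'b::{banach, second_countable_topology}"
  assumes "prob_space M" and cv: "cond_version M S X P p" and f: "f \<in> borel_measurable S"
  shows "integrable M (\<lambda>\<omega>. indicator {\<omega>\<in>space M. P \<omega>} \<omega> *\<^sub>R f (X \<omega>))
           \<longleftrightarrow> integrable M (\<lambda>\<omega>. p (X \<omega>) *\<^sub>R f (X \<omega>))"
    and "(\<integral>\<omega>. indicator {\<omega>\<in>space M. P \<omega>} \<omega> *\<^sub>R f (X \<omega>) \<partial>M)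
           = (\<integral>\<omega>. p (X \<omega>) *\<^sub>R f (X \<omega>) \<partial>M)"
proof -
  note cv' = cond_versionD[OF cv]
  have pX: "(\<lambda>\<omega>. p (X \<omega>)) \<in> borel_measurable M" using cv'(1,3) by measurable
  have fX: "(\<lambda>\<omega>. f (X \<omega>)) \<in> borel_measurable M" using cv'(1) f by measurable
  have E: "(indicator {\<omega>\<in>space M. P \<omega>} :: _ \<Rightarrow> real) \<in> borel_measurable M"
    using cv'(2) by (intro borel_measurable_indicator)
  have p_nonneg: "AE \<omega> in M. 0 \<le> p (X \<omega>)"
    using cond_version_AE_bounds[OF assms(1,2)] by (auto elim: eventually_mono)
  note distr_eq = cond_version_distr_density[OF assms(1,2)]
  have "integrable M (\<lambda>\<omega>. indicator {\<omega>\<in>space M. P \<omega>} \<omega> *\<^sub>R f (X \<omega>))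
      \<longleftrightarrow> integrable (density M (\<lambda>\<omega>. ennreal (indicator {\<omega>\<in>space M. P \<omega>} \<omega>))) (\<lambda>\<omega>. f (X \<omega>))"
    using fX E by (subst integrable_density) auto
  also have "\<dots> \<longleftrightarrow> integrable (distr (density M (\<lambda>\<omega>. ennreal (p (X \<omega>)))) S X) f"
    using cv'(1) f by (simp flip: distr_eq add: integrable_distr_eq)
  also have "\<dots> \<longleftrightarrow> integrable M (\<lambda>\<omega>. p (X \<omega>) *\<^sub>R f (X \<omega>))"
    using cv'(1) f fX pX p_nonneg by (simp add: integrable_distr_eq integrable_density)
  finally show "integrable M (\<lambda>\<omega>. indicator {\<omega>\<in>space M. P \<omega>} \<omega> *\<^sub>R f (X \<omega>))
           \<longleftrightarrow> integrable M (\<lambda>\<omega>. p (X \<omega>) *\<^sub>R f (X \<omega>))" .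
  have "(\<integral>\<omega>. indicator {\<omega>\<in>space M. P \<omega>} \<omega> *\<^sub>R f (X \<omega>) \<partial>M)
      = integral\<^sup>L (density M (\<lambda>\<omega>. ennreal (indicator {\<omega>\<in>space M. P \<omega>} \<omega>))) (\<lambda>\<omega>. f (X \<omega>))"
    using fX E by (subst integral_density) auto
  also have "\<dots> = integral\<^sup>L (distr (density M (\<lambda>\<omega>. ennreal (p (X \<omega>)))) S X) f"
    using cv'(1) f by (simp flip: distr_eq add: integral_distr)
  also have "\<dots> = (\<integral>\<omega>. p (X \<omega>) *\<^sub>R f (X \<omega>) \<partial>M)"
    using cv'(1) f fX pX p_nonneg by (simp add: integral_distr integral_density)
  finally show "(\<integral>\<omega>. indicator {\<omega>\<in>space M. P \<omega>} \<omega> *\<^sub>R f (X \<omega>) \<partial>M)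
           = (\<integral>\<omega>. p (X \<omega>) *\<^sub>R f (X \<omega>) \<partial>M)" .
qed

lemma cond_versionI_bounded:
  assumes "prob_space M" and X: "X \<in> M \<rightarrow>\<^sub>M S" and E: "{\<omega>\<in>space M. P \<omega>} \<in> sets M"
    and g: "g \<in> borel_measurable S" and g_bounded: "\<And>x. x \<in> space S \<Longrightarrow> \<bar>g x\<bar> \<le> 1"
    and eq: "\<And>B. B \<in> sets S \<Longrightarrow> measure M ({\<omega>\<in>space M. P \<omega>} \<inter> (X -` B \<inter> space M))
                 = (\<integral>\<omega>. g (X \<omega>) * indicator (X -` B \<inter> space M) \<omega> \<partial>M)"
  shows "cond_version M S X P g"
proof -
  interpret prob_space M by fact
  have "integrable M (\<lambda>\<omega>. g (X \<omega>))"
    using X g g_bounded measurable_space[OF X]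
    by (intro integrable_const_bound[where B=1] AE_I2) auto
  then show ?thesis unfolding cond_version_def using assms by blast
qed

section \<open>Conditional distribution functions at a measurable threshold\<close>

lemma cond_cdfD:
  assumes "cond_cdf M S X V G"
  shows "\<And>y. cond_version M S X (\<lambda>\<omega>. V \<omega> \<le> y) (G y)"
    and "\<And>x y. x \<in> space S \<Longrightarrow> 0 \<le> G y x \<and> G y x \<le> 1"
    and "\<And>x y. x \<in> space S \<Longrightarrow> continuous (at_right y) (\<lambda>t. G t x)"
    and "X \<in> M \<rightarrow>\<^sub>M S" "V \<in> borel_measurable M" "\<And>y. G y \<in> borel_measurable S"
proof -
  show cv: "\<And>y. cond_version M S X (\<lambda>\<omega>. V \<omega> \<le> y) (G y)"
    and "\<And>x y. x \<in> space S \<Longrightarrow> 0 \<le> G y x \<and> G y x \<le> 1"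
    and "\<And>x y. x \<in> space S \<Longrightarrow> continuous (at_right y) (\<lambda>t. G t x)"
    using assms unfolding cond_cdf_def by auto
  show "X \<in> M \<rightarrow>\<^sub>M S" using cond_versionD(1)[OF cv] .
  show "\<And>y. G y \<in> borel_measurable S" using cond_versionD(3)[OF cv] .
  show "V \<in> borel_measurable M"
    using cond_versionD(2)[OF cv] by (subst borel_measurable_iff_le) auto
qed

lemma measurable_compose_finite_range:
  fixes \<psi> :: "'x \<Rightarrow> real"
  assumes \<psi>: "\<psi> \<in> borel_measurable S" "finite (\<psi> ` space S)"
    and G: "\<And>c. G c \<in> S \<rightarrow>\<^sub>M N"
  shows "(\<lambda>x. G (\<psi> x) x) \<in> S \<rightarrow>\<^sub>M N"
proof (rule measurable_compose_countable'[OF G])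
  have "\<psi> -` {c} \<inter> space S = {x\<in>space S. \<psi> x = c}" for c by auto
  moreover have "{x\<in>space S. \<psi> x = c} \<in> sets S" for c using \<psi>(1) by measurable
  ultimately have "\<psi> -` {c} \<inter> space S \<in> sets S" for c by simp
  then show "\<psi> \<in> S \<rightarrow>\<^sub>M count_space (\<psi> ` space S)"
    using \<psi>(2) by (subst measurable_count_space_eq2) auto
qed (use \<psi>(2) countable_finite in auto)

lemma cond_cdf_finite_range_threshold:
  assumes "prob_space M" and cdf: "cond_cdf M S X V G"
    and \<psi>: "\<psi> \<in> borel_measurable S" "finite (\<psi> ` space S)"
  shows "cond_version M S X (\<lambda>\<omega>. V \<omega> \<le> \<psi> (X \<omega>)) (\<lambda>x. G (\<psi> x) x)"
proof (rule cond_versionI_bounded[OF assms(1)])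
  interpret prob_space M by fact
  note G = cond_cdfD[OF cdf]
  have XS: "\<And>\<omega>. \<omega> \<in> space M \<Longrightarrow> X \<omega> \<in> space S" using G(4) by (meson measurable_space)
  show "X \<in> M \<rightarrow>\<^sub>M S" by (rule G(4))
  show "{\<omega>\<in>space M. V \<omega> \<le> \<psi> (X \<omega>)} \<in> sets M" using G(4,5) \<psi>(1) by measurable
  show "(\<lambda>x. G (\<psi> x) x) \<in> borel_measurable S" by (rule measurable_compose_finite_range[OF \<psi> G(6)])
  show "\<bar>G (\<psi> x) x\<bar> \<le> 1" if "x \<in> space S" for x using G(2)[OF that] by simp
  fix B assume B: "B \<in> sets S"
  define R where "R = \<psi> ` space S"
  define C where "C c = B \<inter> {x\<in>space S. \<psi> x = c}" for c
  have C: "C c \<in> sets S" for c unfolding C_def using B \<psi>(1) by measurable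
  have "{\<omega>\<in>space M. V \<omega> \<le> \<psi> (X \<omega>)} \<inter> (X -` B \<inter> space M)
      = (\<Union>c\<in>R. {\<omega>\<in>space M. V \<omega> \<le> c} \<inter> (X -` C c \<inter> space M))"
    using XS by (auto simp: R_def C_def)
  also have "measure M \<dots> = (\<Sum>c\<in>R. measure M ({\<omega>\<in>space M. V \<omega> \<le> c} \<inter> (X -` C c \<inter> space M)))"
    using \<psi>(2) cond_versionD(2)[OF G(1)] measurable_sets[OF G(4) C]
    by (intro finite_measure_finite_Union) (auto simp: R_def disjoint_family_on_def C_def)
  also have "\<dots> = (\<Sum>c\<in>R. \<integral>\<omega>. G c (X \<omega>) * indicator (X -` C c \<inter> space M) \<omega> \<partial>M)"
    using cond_versionD(5)[OF G(1) C] by simp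
  also have "\<dots> = (\<integral>\<omega>. (\<Sum>c\<in>R. G c (X \<omega>) * indicator (X -` C c \<inter> space M) \<omega>) \<partial>M)"
    using cond_versionD(4)[OF G(1)] measurable_sets[OF G(4) C]
    by (intro Bochner_Integration.integral_sum[symmetric] integrable_real_mult_indicator) auto
  also have "\<dots> = (\<integral>\<omega>. G (\<psi> (X \<omega>)) (X \<omega>) * indicator (X -` B \<inter> space M) \<omega> \<partial>M)"
  proof (rule Bochner_Integration.integral_cong[OF refl])
    fix \<omega> assume \<omega>: "\<omega> \<in> space M"
    have "(\<Sum>c\<in>R. G c (X \<omega>) * indicator (X -` C c \<inter> space M) \<omega>)
        = (\<Sum>c\<in>R. if \<psi> (X \<omega>) = c then G (\<psi> (X \<omega>)) (X \<omega>) * indicator (X -` B \<inter> space M) \<omega> else 0)"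
      using \<omega> XS[OF \<omega>] by (intro sum.cong) (auto simp: C_def indicator_def)
    then show "(\<Sum>c\<in>R. G c (X \<omega>) * indicator (X -` C c \<inter> space M) \<omega>)
        = G (\<psi> (X \<omega>)) (X \<omega>) * indicator (X -` B \<inter> space M) \<omega>"
      using \<psi>(2) XS[OF \<omega>] by (simp add: R_def)
  qed
  finally show "measure M ({\<omega>\<in>space M. V \<omega> \<le> \<psi> (X \<omega>)} \<inter> (X -` B \<inter> space M))
      = (\<integral>\<omega>. G (\<psi> (X \<omega>)) (X \<omega>) * indicator (X -` B \<inter> space M) \<omega> \<partial>M)" .
qed

text \<open>Rounding up to a multiple of \<open>1 / 2^n\<close>, cut off outside \<open>[-n, n]\<close> so that
  \<open>dyadic_ceiling n\<close> takes only finitely many values.\<close>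

definition dyadic_ceiling :: "nat \<Rightarrow> real \<Rightarrow> real" where
  "dyadic_ceiling n t = (if \<bar>t\<bar> \<le> real n then real_of_int \<lceil>2^n * t\<rceil> / 2^n else 0)"

lemma measurable_dyadic_ceiling [measurable]: "dyadic_ceiling n \<in> borel_measurable borel"
  unfolding dyadic_ceiling_def by measurable

lemma finite_range_dyadic_ceiling: "finite (range (dyadic_ceiling n))"
proof (rule finite_subset)
  show "range (dyadic_ceiling n)
      \<subseteq> insert 0 ((\<lambda>j. real_of_int j / 2^n) ` {-(2^n * int n) .. 2^n * int n})"
  proof clarify
    fix t
    assume t: "dyadic_ceiling n t \<notin> (\<lambda>j. real_of_int j / 2^n) ` {-(2^n * int n) .. 2^n * int n}"
    have "\<lceil>2^n * t\<rceil> \<in> {-(2^n * int n) .. 2^n * int n}" if "\<bar>t\<bar> \<le> real n"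
    proof -
      have "\<bar>2^n * t\<bar> \<le> 2^n * real n" using that by (simp add: abs_mult mult_left_mono)
      then have "- (2^n * real n) \<le> 2^n * t" "2^n * t \<le> 2^n * real n" by linarith+
      then show ?thesis by (simp add: ceiling_le_iff le_ceiling_iff)
    qed
    with t show "dyadic_ceiling n t = 0" by (auto simp: dyadic_ceiling_def)
  qed
qed simp

lemma eventually_dyadic_ceiling_bounds:
  "eventually (\<lambda>n. t \<le> dyadic_ceiling n t \<and> dyadic_ceiling n t \<le> t + inverse (2^n)) sequentially"
proof (rule eventually_sequentiallyI)
  fix n assume "nat \<lceil>\<bar>t\<bar>\<rceil> \<le> n"
  then have "\<bar>t\<bar> \<le> real n" by linarith
  moreover have "2^n * t \<le> real_of_int \<lceil>2^n * t\<rceil>" "real_of_int \<lceil>2^n * t\<rceil> \<le> 2^n * t + 1"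
    by linarith+
  ultimately show "t \<le> dyadic_ceiling n t \<and> dyadic_ceiling n t \<le> t + inverse (2^n)"
    by (simp add: dyadic_ceiling_def field_simps)
qed

lemma dyadic_ceiling_tendsto: "(\<lambda>n. dyadic_ceiling n t) \<longlonglongrightarrow> t"
proof (rule tendsto_sandwich[of "\<lambda>n. t" _ _ "\<lambda>n. t + inverse (2^n)"])
  have "(\<lambda>n. t + inverse ((2::real)^n)) \<longlonglongrightarrow> t + 0"
    by (intro tendsto_add tendsto_const LIMSEQ_inverse_realpow_zero) auto
  then show "(\<lambda>n. t + inverse ((2::real)^n)) \<longlonglongrightarrow> t" by simp
qed (use eventually_dyadic_ceiling_bounds[of t] in \<open>auto elim: eventually_mono\<close>)

lemma continuous_at_right_dyadic_ceiling:
  fixes f :: "real \<Rightarrow> 'a::topological_space"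
  assumes "continuous (at_right t) f"
  shows "(\<lambda>n. f (dyadic_ceiling n t)) \<longlonglongrightarrow> f t"
proof (rule continuous_within_tendsto_compose[OF _ _ dyadic_ceiling_tendsto])
  have "{t..} - {t} = {t<..}" by auto
  then have "at t within {t..} = at_right t" by (simp add: at_within_def)
  then show "continuous (at t within {t..}) f" using assms by simp
  show "eventually (\<lambda>n. dyadic_ceiling n t \<in> {t..}) sequentially"
    using eventually_dyadic_ceiling_bounds[of t] by (auto elim: eventually_mono)
qed

lemma tendsto_measure_le_dyadic_ceiling:
  assumes "finite_measure M" and V: "V \<in> borel_measurable M" and T: "T \<in> borel_measurable M"
    and E: "E \<in> sets M"
  shows "(\<lambda>n. measure M ({\<omega>\<in>space M. V \<omega> \<le> dyadic_ceiling n (T \<omega>)} \<inter> E))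
           \<longlonglongrightarrow> measure M ({\<omega>\<in>space M. V \<omega> \<le> T \<omega>} \<inter> E)"
proof -
  interpret finite_measure M by fact
  define D where "D n = {\<omega>\<in>space M. V \<omega> \<le> dyadic_ceiling n (T \<omega>)} \<inter> E" for n
  define D_lim where "D_lim = {\<omega>\<in>space M. V \<omega> \<le> T \<omega>} \<inter> E"
  have sets: "D n \<in> sets M" "D_lim \<in> sets M" for n unfolding D_def D_lim_def using V T E by measurable
  have pointwise: "(\<lambda>n. indicator (D n) \<omega> :: real) \<longlonglongrightarrow> indicator D_lim \<omega>" for \<omega>
  proof (cases "V \<omega> \<le> T \<omega>")
    case True
    have "eventually (\<lambda>n. T \<omega> \<le> dyadic_ceiling n (T \<omega>)) sequentially"
      using eventually_dyadic_ceiling_bounds[of "T \<omega>"] by (auto elim: eventually_mono)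
    then have "eventually (\<lambda>n. indicator (D n) \<omega> = (indicator D_lim \<omega> :: real)) sequentially"
      by eventually_elim (use True in \<open>auto simp: D_def D_lim_def indicator_def\<close>)
    then show ?thesis by (rule tendsto_eventually)
  next
    case False
    then have "T \<omega> < V \<omega>" by simp
    then have "eventually (\<lambda>n. dyadic_ceiling n (T \<omega>) < V \<omega>) sequentially"
      by (rule order_tendstoD(2)[OF dyadic_ceiling_tendsto])
    then have "eventually (\<lambda>n. indicator (D n) \<omega> = (indicator D_lim \<omega> :: real)) sequentially"
      by eventually_elim (use False in \<open>auto simp: D_def D_lim_def indicator_def\<close>)
    then show ?thesis by (rule tendsto_eventually)
  qed
  have "(\<lambda>n. \<integral>\<omega>. indicator (D n) \<omega> \<partial>M) \<longlonglongrightarrow> (\<integral>\<omega>. (indicator D_lim \<omega> :: real) \<partial>M)"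
  proof (rule integral_dominated_convergence[where w="\<lambda>_. 1"])
    show "AE \<omega> in M. norm (indicator (D n) \<omega> :: real) \<le> 1" for n
      by (intro AE_I2) (auto simp: indicator_def)
  qed (use sets pointwise in auto)
  then show ?thesis using sets by (simp add: D_def D_lim_def)
qed

lemma cond_cdf_measurable_threshold:
  assumes "prob_space M" and cdf: "cond_cdf M S X V G" and \<phi>: "\<phi> \<in> borel_measurable S"
  shows "cond_version M S X (\<lambda>\<omega>. V \<omega> \<le> \<phi> (X \<omega>)) (\<lambda>x. G (\<phi> x) x)"
proof (rule cond_versionI_bounded[OF assms(1)])
  interpret prob_space M by fact
  note G = cond_cdfD[OF cdf]
  have XS: "\<And>\<omega>. \<omega> \<in> space M \<Longrightarrow> X \<omega> \<in> space S" using G(4) by (meson measurable_space)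
  define \<phi>\<^sub>n where "\<phi>\<^sub>n n x = dyadic_ceiling n (\<phi> x)" for n x
  have "finite (\<phi>\<^sub>n n ` space S)" for n
    by (rule finite_subset[OF _ finite_range_dyadic_ceiling[of n]]) (auto simp: \<phi>\<^sub>n_def)
  then have approx: "cond_version M S X (\<lambda>\<omega>. V \<omega> \<le> \<phi>\<^sub>n n (X \<omega>)) (\<lambda>x. G (\<phi>\<^sub>n n x) x)" for n
    using \<phi> by (intro cond_cdf_finite_range_threshold[OF assms(1) cdf]) (auto simp: \<phi>\<^sub>n_def)
  have lim: "(\<lambda>n. G (\<phi>\<^sub>n n x) x) \<longlonglongrightarrow> G (\<phi> x) x" if "x \<in> space S" for x
    unfolding \<phi>\<^sub>n_def using G(3)[OF that] by (rule continuous_at_right_dyadic_ceiling)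
  show "X \<in> M \<rightarrow>\<^sub>M S" by (rule G(4))
  show "{\<omega>\<in>space M. V \<omega> \<le> \<phi> (X \<omega>)} \<in> sets M" using G(4,5) \<phi> by measurable
  show G\<phi>: "(\<lambda>x. G (\<phi> x) x) \<in> borel_measurable S"
    by (rule borel_measurable_LIMSEQ_real[OF lim cond_versionD(3)[OF approx]])
  show "\<bar>G (\<phi> x) x\<bar> \<le> 1" if "x \<in> space S" for x using G(2)[OF that] by simp
  fix B assume B: "B \<in> sets S"
  have XB: "X -` B \<inter> space M \<in> sets M" using measurable_sets[OF G(4) B] .
  have "(\<lambda>n. measure M ({\<omega>\<in>space M. V \<omega> \<le> \<phi>\<^sub>n n (X \<omega>)} \<inter> (X -` B \<inter> space M)))
      \<longlonglongrightarrow> measure M ({\<omega>\<in>space M. V \<omega> \<le> \<phi> (X \<omega>)} \<inter> (X -` B \<inter> space M))"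
    unfolding \<phi>\<^sub>n_def using G(5) measurable_compose[OF G(4) \<phi>] XB
    by (intro tendsto_measure_le_dyadic_ceiling finite_measure_axioms)
  moreover have "(\<lambda>n. measure M ({\<omega>\<in>space M. V \<omega> \<le> \<phi>\<^sub>n n (X \<omega>)} \<inter> (X -` B \<inter> space M)))
      \<longlonglongrightarrow> (\<integral>\<omega>. G (\<phi> (X \<omega>)) (X \<omega>) * indicator (X -` B \<inter> space M) \<omega> \<partial>M)"
    unfolding cond_versionD(5)[OF approx B]
  proof (rule integral_dominated_convergence[where w="\<lambda>_. 1"])
    show "(\<lambda>\<omega>. G (\<phi>\<^sub>n n (X \<omega>)) (X \<omega>) * indicator (X -` B \<inter> space M) \<omega>) \<in> borel_measurable M" for n
      using cond_versionD(3)[OF approx] G(4) XB by measurable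
    show "(\<lambda>\<omega>. G (\<phi> (X \<omega>)) (X \<omega>) * indicator (X -` B \<inter> space M) \<omega>) \<in> borel_measurable M"
      using G\<phi> G(4) XB by measurable
    show "AE \<omega> in M. norm (G (\<phi>\<^sub>n n (X \<omega>)) (X \<omega>) * indicator (X -` B \<inter> space M) \<omega>) \<le> 1" for n
      using XS G(2) by (intro AE_I2) (auto simp: indicator_def)
    show "AE \<omega> in M. (\<lambda>n. G (\<phi>\<^sub>n n (X \<omega>)) (X \<omega>) * indicator (X -` B \<inter> space M) \<omega>)
             \<longlonglongrightarrow> G (\<phi> (X \<omega>)) (X \<omega>) * indicator (X -` B \<inter> space M) \<omega>"
      using XS lim by (intro AE_I2 tendsto_mult_right) auto
  qed simp
  ultimately show "measure M ({\<omega>\<in>space M. V \<omega> \<le> \<phi> (X \<omega>)} \<inter> (X -` B \<inter> space M))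
      = (\<integral>\<omega>. G (\<phi> (X \<omega>)) (X \<omega>) * indicator (X -` B \<inter> space M) \<omega> \<partial>M)"
    by (rule LIMSEQ_unique)
qed

section \<open>Treatment histories\<close>

lemma trunc_abar: "m \<le> k \<Longrightarrow> trunc m (abar A k \<omega>) = abar A m \<omega>"
  by (auto simp: trunc_def abar_def fun_eq_iff)

lemma trunc_trunc: "m \<le> k \<Longrightarrow> trunc m (trunc k a) = trunc m a"
  by (auto simp: trunc_def fun_eq_iff)

lemma trunc_fun_upd: "m < k \<Longrightarrow> trunc m (a(k := b)) = trunc m a"
  by (auto simp: trunc_def fun_eq_iff)

lemma abar_0_eq_trunc_0: "abar A 0 \<omega> = trunc 0 a"
  by (simp add: trunc_def abar_def)

lemma restrict_lbar: "j \<le> k \<Longrightarrow> restrict (lbar L k \<omega>) {1..j} = lbar L j \<omega>"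
  by (auto simp: lbar_def fun_eq_iff)

lemma abar_eq_trunc_iff:
  assumes "1 \<le> k"
  shows "abar A k \<omega> = trunc k a \<longleftrightarrow> abar A (k - 1) \<omega> = trunc (k - 1) a \<and> A k \<omega> = a k"
proof
  assume eq: "abar A k \<omega> = trunc k a"
  then have "abar A (k - 1) \<omega> = trunc (k - 1) a"
    using trunc_abar[of "k - 1" k A \<omega>] trunc_trunc[of "k - 1" k a] by simp
  moreover have "A k \<omega> = a k" using fun_cong[OF eq, of k] assms by (simp add: abar_def trunc_def)
  ultimately show "abar A (k - 1) \<omega> = trunc (k - 1) a \<and> A k \<omega> = a k" by simp
next
  assume eq: "abar A (k - 1) \<omega> = trunc (k - 1) a \<and> A k \<omega> = a k"
  show "abar A k \<omega> = trunc k a"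
  proof
    fix i
    show "abar A k \<omega> i = trunc k a i"
    proof (cases "i = k")
      case True then show ?thesis using eq assms by (simp add: abar_def trunc_def)
    next
      case False
      then show ?thesis using fun_cong[OF conjunct1[OF eq], of i] by (auto simp: abar_def trunc_def)
    qed
  qed
qed

lemma abar_eq_flip:
  assumes "1 \<le> k" "abar A (k - 1) \<omega> = trunc (k - 1) a" "A k \<omega> = (\<not> a k)"
  shows "abar A k \<omega> = (trunc k a)(k := \<not> a k)"
proof
  fix i
  show "abar A k \<omega> i = ((trunc k a)(k := \<not> a k)) i"
  proof (cases "i = k")
    case True then show ?thesis using assms by (simp add: abar_def trunc_def)
  next
    case False
    then show ?thesis using fun_cong[OF assms(2), of i] by (auto simp: abar_def trunc_def)
  qed
qed

lemma abar_in_regimes: "abar A K \<omega> \<in> regimes K"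
  by (auto simp: regimes_def abar_def)

lemma trunc_regimes: "a \<in> regimes K \<Longrightarrow> trunc K a = a"
  by (auto simp: regimes_def trunc_def fun_eq_iff)

lemma finite_regimes: "finite (regimes K)"
proof (rule finite_subset)
  show "regimes K \<subseteq> (\<lambda>S i. i \<in> S) ` Pow {1..K}"
  proof
    fix a assume "a \<in> regimes K"
    then have "a = (\<lambda>i. i \<in> {i. a i})" "{i. a i} \<in> Pow {1..K}" by (auto simp: regimes_def)
    then show "a \<in> (\<lambda>S i. i \<in> S) ` Pow {1..K}" by blast
  qed
qed simp

lemma measurable_history:
  assumes A: "\<forall>i\<in>{1..k}. A i \<in> M \<rightarrow>\<^sub>M count_space UNIV" and L: "\<forall>i\<in>{1..k}. L i \<in> M \<rightarrow>\<^sub>M N"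
    and "m \<le> k"
  shows "(\<lambda>\<omega>. (abar A m \<omega>, lbar L k \<omega>)) \<in> M \<rightarrow>\<^sub>M hist_space N k"
  unfolding hist_space_def
proof (rule measurable_Pair)
  have "{\<omega>\<in>space M. abar A m \<omega> = \<beta>} \<in> sets M" if "\<beta> \<in> regimes m" for \<beta>
  proof -
    have "{\<omega>\<in>space M. abar A m \<omega> = \<beta>} = {\<omega>\<in>space M. \<forall>i\<in>{1..m}. A i \<omega> = \<beta> i}"
      using that by (auto simp: abar_def regimes_def fun_eq_iff)
    also have "\<dots> \<in> sets M"
      by measurable (use A \<open>m \<le> k\<close> in auto)
    finally show ?thesis .
  qed
  then have "abar A m \<in> M \<rightarrow>\<^sub>M count_space (regimes m)"
    by (subst measurable_count_space_eq2[OF finite_regimes])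
       (auto simp: abar_in_regimes vimage_def Int_def conj_commute)
  then show "abar A m \<in> M \<rightarrow>\<^sub>M count_space UNIV"
    by (rule measurable_compose) simp
  show "lbar L k \<in> M \<rightarrow>\<^sub>M Pi\<^sub>M {1..k} (\<lambda>i. N)"
    unfolding lbar_def using L by (intro measurable_restrict) auto
qed

section \<open>Sequential treatment assignment and inverse probability weights\<close>

lemma integrable_scaleR_bounded_factor:
  fixes g :: "'a \<Rightarrow> 'b::{banach, second_countable_topology}"
  assumes int: "integrable M (\<lambda>\<omega>. w \<omega> *\<^sub>R g \<omega>)"
    and meas: "w \<in> borel_measurable M" "b \<in> borel_measurable M" "g \<in> borel_measurable M"
    and bounded: "AE \<omega> in M. w \<omega> \<noteq> 0 \<longrightarrow> \<bar>b \<omega>\<bar> \<le> 1"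
  shows "integrable M (\<lambda>\<omega>. w \<omega> *\<^sub>R (b \<omega> *\<^sub>R g \<omega>))"
proof (rule Bochner_Integration.integrable_bound[OF int])
  show "(\<lambda>\<omega>. w \<omega> *\<^sub>R (b \<omega> *\<^sub>R g \<omega>)) \<in> borel_measurable M" using meas by measurable
  show "AE \<omega> in M. norm (w \<omega> *\<^sub>R (b \<omega> *\<^sub>R g \<omega>)) \<le> norm (w \<omega> *\<^sub>R g \<omega>)"
    using bounded
  proof eventually_elim
    case (elim \<omega>)
    show ?case
    proof (cases "w \<omega> = 0")
      case False
      then have "\<bar>b \<omega>\<bar> * norm (g \<omega>) \<le> 1 * norm (g \<omega>)"
        using elim by (intro mult_right_mono) auto
      then show ?thesis by (simp add: abs_mult mult.assoc mult_left_mono)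
    qed simp
  qed
qed

locale sequential_treatment =
  fixes M :: "'w measure" and K :: nat
    and A :: "nat \<Rightarrow> 'w \<Rightarrow> bool" and L :: "nat \<Rightarrow> 'w \<Rightarrow> 'l" and N :: "'l measure"
    and ptrue :: "nat \<Rightarrow> bool \<Rightarrow> ((nat \<Rightarrow> bool) \<times> (nat \<Rightarrow> 'l)) \<Rightarrow> real"
  assumes prob_space: "prob_space M"
    and measA: "\<forall>k\<in>{1..K}. A k \<in> M \<rightarrow>\<^sub>M count_space UNIV"
    and measL: "\<forall>k\<in>{1..K}. L k \<in> M \<rightarrow>\<^sub>M N"
    and ptrue: "\<forall>k\<in>{1..K}. \<forall>b. cond_version M (hist_space N k)
                  (\<lambda>\<omega>. (abar A (k - 1) \<omega>, lbar L k \<omega>)) (\<lambda>\<omega>. A k \<omega> = b) (ptrue k b)"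
    and positivity: "\<forall>k\<in>{1..K}. AE \<omega> in M. \<forall>b. ptrue k b (abar A (k - 1) \<omega>, lbar L k \<omega>) > 0"
begin

definition history_measurable :: "nat \<Rightarrow> nat \<Rightarrow> ('w \<Rightarrow> 'b::topological_space) \<Rightarrow> bool" where
  "history_measurable m k \<psi> \<longleftrightarrow>
     (\<exists>f \<in> borel_measurable (hist_space N k). \<forall>\<omega>\<in>space M. \<psi> \<omega> = f (abar A m \<omega>, lbar L k \<omega>))"

definition propensity_prod :: "(nat \<Rightarrow> bool) \<Rightarrow> nat \<Rightarrow> 'w \<Rightarrow> real" where
  "propensity_prod a j \<omega> = (\<Prod>i\<in>{1..j}. ptrue i (a i) (trunc (i - 1) a, lbar L i \<omega>))"

definition ipw :: "(nat \<Rightarrow> bool) \<Rightarrow> nat \<Rightarrow> 'w \<Rightarrow> real" where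
  "ipw a j \<omega> = (if abar A j \<omega> = trunc j a then 1 else 0) / propensity_prod a j \<omega>"

lemma measurable_history_of_le:
  "m \<le> k \<Longrightarrow> k \<le> K \<Longrightarrow> (\<lambda>\<omega>. (abar A m \<omega>, lbar L k \<omega>)) \<in> M \<rightarrow>\<^sub>M hist_space N k"
  using measA measL by (intro measurable_history) auto

lemma history_measurable_mono:
  assumes "history_measurable m k \<psi>" "m \<le> m'" "k \<le> k'"
  shows "history_measurable m' k' \<psi>"
proof -
  obtain f where f: "f \<in> borel_measurable (hist_space N k)"
    "\<forall>\<omega>\<in>space M. \<psi> \<omega> = f (abar A m \<omega>, lbar L k \<omega>)"
    using assms(1) unfolding history_measurable_def by blast
  have "(\<lambda>x. (trunc m (fst x), restrict (snd x) {1..k})) \<in> hist_space N k' \<rightarrow>\<^sub>M hist_space N k"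
    unfolding hist_space_def
  proof (rule measurable_Pair)
    show "(\<lambda>x. restrict (snd x) {1..k}) \<in> count_space UNIV \<Otimes>\<^sub>M Pi\<^sub>M {1..k'} (\<lambda>i. N) \<rightarrow>\<^sub>M Pi\<^sub>M {1..k} (\<lambda>i. N)"
      using assms(3) by (intro measurable_compose[OF measurable_snd measurable_restrict_subset]) auto
  qed (rule measurable_compose[OF measurable_fst], simp)
  then have "(\<lambda>x. f (trunc m (fst x), restrict (snd x) {1..k})) \<in> borel_measurable (hist_space N k')"
    using f(1) by measurable
  moreover have "\<forall>\<omega>\<in>space M. \<psi> \<omega> = f (trunc m (abar A m' \<omega>), restrict (lbar L k' \<omega>) {1..k})"
    unfolding trunc_abar[OF assms(2)] restrict_lbar[OF assms(3)] by (rule f(2))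
  ultimately show ?thesis unfolding history_measurable_def
    by (intro bexI[of _ "\<lambda>x. f (trunc m (fst x), restrict (snd x) {1..k})"]) auto
qed

lemma history_measurable_measurable:
  assumes "history_measurable m k \<psi>" "m \<le> k" "k \<le> K"
  shows "\<psi> \<in> borel_measurable M"
proof -
  obtain f where f: "f \<in> borel_measurable (hist_space N k)"
    "\<forall>\<omega>\<in>space M. \<psi> \<omega> = f (abar A m \<omega>, lbar L k \<omega>)"
    using assms(1) unfolding history_measurable_def by blast
  have "(\<lambda>\<omega>. f (abar A m \<omega>, lbar L k \<omega>)) \<in> borel_measurable M"
    using measurable_history_of_le[OF assms(2,3)] f(1) by measurable
  then show ?thesis using f(2) by (simp cong: measurable_cong)
qed

lemma history_measurable_combine:
  assumes "history_measurable m k \<psi>\<^sub>1" "history_measurable m k \<psi>\<^sub>2"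
    and F: "\<And>f\<^sub>1 f\<^sub>2. f\<^sub>1 \<in> borel_measurable (hist_space N k) \<Longrightarrow> f\<^sub>2 \<in> borel_measurable (hist_space N k) \<Longrightarrow>
              (\<lambda>x. F (f\<^sub>1 x) (f\<^sub>2 x)) \<in> borel_measurable (hist_space N k)"
  shows "history_measurable m k (\<lambda>\<omega>. F (\<psi>\<^sub>1 \<omega>) (\<psi>\<^sub>2 \<omega>))"
proof -
  obtain f\<^sub>1 f\<^sub>2 where f:
    "f\<^sub>1 \<in> borel_measurable (hist_space N k)" "f\<^sub>2 \<in> borel_measurable (hist_space N k)"
    "\<forall>\<omega>\<in>space M. \<psi>\<^sub>1 \<omega> = f\<^sub>1 (abar A m \<omega>, lbar L k \<omega>) \<and> \<psi>\<^sub>2 \<omega> = f\<^sub>2 (abar A m \<omega>, lbar L k \<omega>)"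
    using assms(1,2) unfolding history_measurable_def by metis
  then show ?thesis unfolding history_measurable_def
    by (intro bexI[of _ "\<lambda>x. F (f\<^sub>1 x) (f\<^sub>2 x)"] F) auto
qed

lemma history_measurable_mult:
  fixes \<psi>\<^sub>1 \<psi>\<^sub>2 :: "'w \<Rightarrow> real"
  shows "history_measurable m k \<psi>\<^sub>1 \<Longrightarrow> history_measurable m k \<psi>\<^sub>2 \<Longrightarrow>
    history_measurable m k (\<lambda>\<omega>. \<psi>\<^sub>1 \<omega> * \<psi>\<^sub>2 \<omega>)"
  by (erule history_measurable_combine) measurable

lemma history_measurable_divide:
  fixes \<psi>\<^sub>1 \<psi>\<^sub>2 :: "'w \<Rightarrow> real"
  shows "history_measurable m k \<psi>\<^sub>1 \<Longrightarrow> history_measurable m k \<psi>\<^sub>2 \<Longrightarrow>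
    history_measurable m k (\<lambda>\<omega>. \<psi>\<^sub>1 \<omega> / \<psi>\<^sub>2 \<omega>)"
  by (erule history_measurable_combine) measurable

lemma history_measurable_diff:
  fixes \<psi>\<^sub>1 \<psi>\<^sub>2 :: "'w \<Rightarrow> real"
  shows "history_measurable m k \<psi>\<^sub>1 \<Longrightarrow> history_measurable m k \<psi>\<^sub>2 \<Longrightarrow>
    history_measurable m k (\<lambda>\<omega>. \<psi>\<^sub>1 \<omega> - \<psi>\<^sub>2 \<omega>)"
  by (erule history_measurable_combine) measurable

lemma history_measurable_scaleR:
  fixes \<psi>\<^sub>1 :: "'w \<Rightarrow> real" and \<psi>\<^sub>2 :: "'w \<Rightarrow> 'b::{second_countable_topology, real_normed_vector}"
  shows "history_measurable m k \<psi>\<^sub>1 \<Longrightarrow> history_measurable m k \<psi>\<^sub>2 \<Longrightarrow>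
    history_measurable m k (\<lambda>\<omega>. \<psi>\<^sub>1 \<omega> *\<^sub>R \<psi>\<^sub>2 \<omega>)"
  by (erule history_measurable_combine) measurable

lemma history_measurable_covariates:
  assumes "u \<in> borel_measurable (Pi\<^sub>M {1..k} (\<lambda>i. N))"
  shows "history_measurable m k (\<lambda>\<omega>. u (lbar L k \<omega>))"
  unfolding history_measurable_def hist_space_def
  by (intro bexI[of _ "\<lambda>x. u (snd x)"] measurable_compose[OF measurable_snd assms]) auto

lemma history_measurable_fixed_treatment:
  assumes "g \<in> borel_measurable (hist_space N k)"
  shows "history_measurable m k (\<lambda>\<omega>. g (\<beta>, lbar L k \<omega>))"
proof -
  have "(\<lambda>l. (\<beta>, l)) \<in> Pi\<^sub>M {1..k} (\<lambda>i. N) \<rightarrow>\<^sub>M hist_space N k"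
    unfolding hist_space_def by measurable
  from history_measurable_covariates[OF measurable_compose[OF this assms]] show ?thesis .
qed

lemma history_measurable_treatment_indicator:
  "j \<le> m \<Longrightarrow> history_measurable m k (\<lambda>\<omega>. if abar A j \<omega> = \<beta> then 1 else 0 :: real)"
  unfolding history_measurable_def hist_space_def
  by (intro bexI[of _ "\<lambda>x. if trunc j (fst x) = \<beta> then 1 else 0"]
      measurable_compose[OF measurable_fst, where g="\<lambda>\<alpha>. if trunc j \<alpha> = \<beta> then 1 else 0"])
     (auto simp: trunc_abar)

lemma history_measurable_propensity:
  assumes "i \<in> {1..K}" "i \<le> k"
  shows "history_measurable m k (\<lambda>\<omega>. ptrue i b (\<beta>, lbar L i \<omega>))"
proof -
  have "ptrue i b \<in> borel_measurable (hist_space N i)"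
    using ptrue assms(1) cond_versionD(3) by blast
  then show ?thesis
    using history_measurable_fixed_treatment history_measurable_mono assms(2) by blast
qed

lemma history_measurable_propensity_prod:
  assumes "j \<le> k" "j \<le> K"
  shows "history_measurable m k (propensity_prod a j)"
proof -
  have "(\<lambda>l. ptrue i (a i) (trunc (i - 1) a, restrict l {1..i}))
      \<in> borel_measurable (Pi\<^sub>M {1..k} (\<lambda>i. N))" if "i \<in> {1..j}" for i
  proof (rule measurable_compose[of _ _ "hist_space N i"])
    show "(\<lambda>l. (trunc (i - 1) a, restrict l {1..i})) \<in> Pi\<^sub>M {1..k} (\<lambda>i. N) \<rightarrow>\<^sub>M hist_space N i"
      unfolding hist_space_def using that assms
      by (intro measurable_Pair measurable_restrict_subset) auto
    show "ptrue i (a i) \<in> borel_measurable (hist_space N i)"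
      using cond_versionD(3)[OF ptrue[rule_format, of i]] that assms by auto
  qed
  then have meas: "(\<lambda>l. \<Prod>i\<in>{1..j}. ptrue i (a i) (trunc (i - 1) a, restrict l {1..i}))
      \<in> borel_measurable (Pi\<^sub>M {1..k} (\<lambda>i. N))"
    by (rule borel_measurable_prod)
  have "propensity_prod a j
      = (\<lambda>\<omega>. \<Prod>i\<in>{1..j}. ptrue i (a i) (trunc (i - 1) a, restrict (lbar L k \<omega>) {1..i}))"
    unfolding propensity_prod_def
  proof (intro ext prod.cong[OF refl])
    fix \<omega> i assume "i \<in> {1..j}"
    then have "i \<le> k" using assms(1) by simp
    show "ptrue i (a i) (trunc (i - 1) a, lbar L i \<omega>)
        = ptrue i (a i) (trunc (i - 1) a, restrict (lbar L k \<omega>) {1..i})"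
      unfolding restrict_lbar[OF \<open>i \<le> k\<close>] ..
  qed
  then show ?thesis using history_measurable_covariates[OF meas] by simp
qed

lemma history_measurable_ipw:
  "j \<le> m \<Longrightarrow> j \<le> k \<Longrightarrow> j \<le> K \<Longrightarrow> history_measurable m k (ipw a j)"
  unfolding ipw_def[abs_def]
  by (intro history_measurable_divide history_measurable_treatment_indicator
      history_measurable_propensity_prod)

lemma ipw_measurable: "j \<le> K \<Longrightarrow> ipw a j \<in> borel_measurable M"
  by (rule history_measurable_measurable[OF history_measurable_ipw[of j j j]]) auto

lemma ipw_0: "ipw a 0 \<omega> = 1"
  by (simp add: ipw_def propensity_prod_def abar_0_eq_trunc_0[of _ _ a])

lemma ipw_nonzeroD: "ipw a j \<omega> \<noteq> 0 \<Longrightarrow> abar A j \<omega> = trunc j a"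
  by (auto simp: ipw_def split: if_splits)

lemma ipw_step:
  assumes "1 \<le> k"
  shows "ipw a k \<omega> = (if A k \<omega> = a k then 1 else 0)
                        * (ipw a (k - 1) \<omega> / ptrue k (a k) (trunc (k - 1) a, lbar L k \<omega>))"
proof -
  have "propensity_prod a k \<omega>
      = propensity_prod a (k - 1) \<omega> * ptrue k (a k) (trunc (k - 1) a, lbar L k \<omega>)"
    using assms unfolding propensity_prod_def by (cases k) (simp_all add: prod.nat_ivl_Suc')
  then show ?thesis unfolding ipw_def using abar_eq_trunc_iff[OF assms, of A \<omega> a] by auto
qed

lemma integral_treatment_indicator:
  fixes \<psi> :: "'w \<Rightarrow> 'b::{banach, second_countable_topology}"
  assumes k: "k \<in> {1..K}" and \<psi>: "history_measurable (k - 1) k \<psi>"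
  shows "integrable M (\<lambda>\<omega>. indicator {\<omega>\<in>space M. A k \<omega> = b} \<omega> *\<^sub>R \<psi> \<omega>)
       \<longleftrightarrow> integrable M (\<lambda>\<omega>. ptrue k b (abar A (k - 1) \<omega>, lbar L k \<omega>) *\<^sub>R \<psi> \<omega>)"
    and "(\<integral>\<omega>. indicator {\<omega>\<in>space M. A k \<omega> = b} \<omega> *\<^sub>R \<psi> \<omega> \<partial>M)
       = (\<integral>\<omega>. ptrue k b (abar A (k - 1) \<omega>, lbar L k \<omega>) *\<^sub>R \<psi> \<omega> \<partial>M)"
proof -
  obtain f where f: "f \<in> borel_measurable (hist_space N k)"
    "\<forall>\<omega>\<in>space M. \<psi> \<omega> = f (abar A (k - 1) \<omega>, lbar L k \<omega>)"
    using \<psi> unfolding history_measurable_def by blast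
  note cv = cond_version_integral[OF prob_space ptrue[rule_format, OF k] f(1)]
  show "integrable M (\<lambda>\<omega>. indicator {\<omega>\<in>space M. A k \<omega> = b} \<omega> *\<^sub>R \<psi> \<omega>)
       \<longleftrightarrow> integrable M (\<lambda>\<omega>. ptrue k b (abar A (k - 1) \<omega>, lbar L k \<omega>) *\<^sub>R \<psi> \<omega>)"
    using cv(1) f(2) by (simp cong: Bochner_Integration.integrable_cong)
  show "(\<integral>\<omega>. indicator {\<omega>\<in>space M. A k \<omega> = b} \<omega> *\<^sub>R \<psi> \<omega> \<partial>M)
       = (\<integral>\<omega>. ptrue k b (abar A (k - 1) \<omega>, lbar L k \<omega>) *\<^sub>R \<psi> \<omega> \<partial>M)"
    using cv(2) f(2) by (simp cong: Bochner_Integration.integral_cong)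
qed

lemma AE_propensity_cancels_ipw:
  assumes k: "k \<in> {1..K}"
  shows "AE \<omega> in M. ptrue k (a k) (abar A (k - 1) \<omega>, lbar L k \<omega>)
      * (ipw a (k - 1) \<omega> / ptrue k (a k) (trunc (k - 1) a, lbar L k \<omega>)) = ipw a (k - 1) \<omega>"
  using positivity[rule_format, OF k]
proof eventually_elim
  case (elim \<omega>)
  show ?case
  proof (cases "abar A (k - 1) \<omega> = trunc (k - 1) a")
    case True
    then show ?thesis using elim[rule_format, of "a k"] by simp
  next
    case False
    then have "ipw a (k - 1) \<omega> = 0" using ipw_nonzeroD by blast
    then show ?thesis by simp
  qed
qed

lemma integral_ipw_step:
  fixes \<psi> :: "'w \<Rightarrow> 'b::{banach, second_countable_topology}"
  assumes k: "k \<in> {1..K}" and \<psi>: "history_measurable (k - 1) k \<psi>"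
  shows "integrable M (\<lambda>\<omega>. ipw a k \<omega> *\<^sub>R \<psi> \<omega>) \<longleftrightarrow> integrable M (\<lambda>\<omega>. ipw a (k - 1) \<omega> *\<^sub>R \<psi> \<omega>)"
    and "(\<integral>\<omega>. ipw a k \<omega> *\<^sub>R \<psi> \<omega> \<partial>M) = (\<integral>\<omega>. ipw a (k - 1) \<omega> *\<^sub>R \<psi> \<omega> \<partial>M)"
proof -
  define p where "p \<omega> = ptrue k (a k) (trunc (k - 1) a, lbar L k \<omega>)" for \<omega>
  define \<phi> where "\<phi> \<omega> = (ipw a (k - 1) \<omega> / p \<omega>) *\<^sub>R \<psi> \<omega>" for \<omega>
  have \<phi>: "history_measurable (k - 1) k \<phi>"
    unfolding \<phi>_def p_def using k
    by (intro history_measurable_scaleR history_measurable_divide history_measurable_ipw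
        history_measurable_propensity \<psi>) auto
  have ipw_k: "ipw a k \<omega> *\<^sub>R \<psi> \<omega> = indicator {\<omega>\<in>space M. A k \<omega> = a k} \<omega> *\<^sub>R \<phi> \<omega>"
    if "\<omega> \<in> space M" for \<omega>
    using ipw_step[of k a \<omega>] k that by (auto simp: \<phi>_def p_def indicator_def)
  have ipw_k1: "AE \<omega> in M. ptrue k (a k) (abar A (k - 1) \<omega>, lbar L k \<omega>) *\<^sub>R \<phi> \<omega>
      = ipw a (k - 1) \<omega> *\<^sub>R \<psi> \<omega>"
    using AE_propensity_cancels_ipw[OF k, of a] by eventually_elim (simp add: \<phi>_def p_def)
  have le: "k - 1 \<le> k" "k \<le> K" using k by auto
  have "\<phi> \<in> borel_measurable M" "\<psi> \<in> borel_measurable M" "ipw a (k - 1) \<in> borel_measurable M"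
    using history_measurable_measurable[OF \<phi> le] history_measurable_measurable[OF \<psi> le]
      ipw_measurable le by auto
  then have meas: "(\<lambda>\<omega>. ptrue k (a k) (abar A (k - 1) \<omega>, lbar L k \<omega>) *\<^sub>R \<phi> \<omega>) \<in> borel_measurable M"
    "(\<lambda>\<omega>. ipw a (k - 1) \<omega> *\<^sub>R \<psi> \<omega>) \<in> borel_measurable M"
    using cond_versionD(3)[OF ptrue[rule_format, OF k]] measurable_history_of_le[OF le] by measurable
  have "integrable M (\<lambda>\<omega>. ipw a k \<omega> *\<^sub>R \<psi> \<omega>)
      \<longleftrightarrow> integrable M (\<lambda>\<omega>. indicator {\<omega>\<in>space M. A k \<omega> = a k} \<omega> *\<^sub>R \<phi> \<omega>)"
    using ipw_k by (intro Bochner_Integration.integrable_cong) auto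
  also have "\<dots> \<longleftrightarrow> integrable M (\<lambda>\<omega>. ptrue k (a k) (abar A (k - 1) \<omega>, lbar L k \<omega>) *\<^sub>R \<phi> \<omega>)"
    by (rule integral_treatment_indicator(1)[OF k \<phi>])
  also have "\<dots> \<longleftrightarrow> integrable M (\<lambda>\<omega>. ipw a (k - 1) \<omega> *\<^sub>R \<psi> \<omega>)"
    by (rule integrable_cong_AE[OF meas ipw_k1])
  finally show "integrable M (\<lambda>\<omega>. ipw a k \<omega> *\<^sub>R \<psi> \<omega>) \<longleftrightarrow> integrable M (\<lambda>\<omega>. ipw a (k - 1) \<omega> *\<^sub>R \<psi> \<omega>)" .
  have "(\<integral>\<omega>. ipw a k \<omega> *\<^sub>R \<psi> \<omega> \<partial>M) = (\<integral>\<omega>. indicator {\<omega>\<in>space M. A k \<omega> = a k} \<omega> *\<^sub>R \<phi> \<omega> \<partial>M)"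
    using ipw_k by (intro Bochner_Integration.integral_cong) auto
  also have "\<dots> = (\<integral>\<omega>. ptrue k (a k) (abar A (k - 1) \<omega>, lbar L k \<omega>) *\<^sub>R \<phi> \<omega> \<partial>M)"
    by (rule integral_treatment_indicator(2)[OF k \<phi>])
  also have "\<dots> = (\<integral>\<omega>. ipw a (k - 1) \<omega> *\<^sub>R \<psi> \<omega> \<partial>M)"
    by (rule integral_cong_AE[OF meas ipw_k1])
  finally show "(\<integral>\<omega>. ipw a k \<omega> *\<^sub>R \<psi> \<omega> \<partial>M) = (\<integral>\<omega>. ipw a (k - 1) \<omega> *\<^sub>R \<psi> \<omega> \<partial>M)" .
qed

lemma integral_ipw_iterate:
  fixes \<psi> :: "'w \<Rightarrow> 'b::{banach, second_countable_topology}"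
  assumes "j \<le> j'" "j' \<le> K" and \<psi>: "\<And>k. k \<in> {Suc j..j'} \<Longrightarrow> history_measurable (k - 1) k \<psi>"
  shows "integrable M (\<lambda>\<omega>. ipw a j' \<omega> *\<^sub>R \<psi> \<omega>) \<longleftrightarrow> integrable M (\<lambda>\<omega>. ipw a j \<omega> *\<^sub>R \<psi> \<omega>)"
    and "(\<integral>\<omega>. ipw a j' \<omega> *\<^sub>R \<psi> \<omega> \<partial>M) = (\<integral>\<omega>. ipw a j \<omega> *\<^sub>R \<psi> \<omega> \<partial>M)"
  using assms(1)
proof (induction j' rule: dec_induct)
  case (step k)
  have "Suc k \<in> {1..K}" "history_measurable (Suc k - 1) (Suc k) \<psi>"
    using step(1,2) assms(2) \<psi>[of "Suc k"] by auto
  note integral_ipw_step[OF this, of a]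
  with step show "integrable M (\<lambda>\<omega>. ipw a (Suc k) \<omega> *\<^sub>R \<psi> \<omega>) \<longleftrightarrow> integrable M (\<lambda>\<omega>. ipw a j \<omega> *\<^sub>R \<psi> \<omega>)"
    and "(\<integral>\<omega>. ipw a (Suc k) \<omega> *\<^sub>R \<psi> \<omega> \<partial>M) = (\<integral>\<omega>. ipw a j \<omega> *\<^sub>R \<psi> \<omega> \<partial>M)"
    by simp_all
qed simp_all

lemma ipw_baseline:
  fixes \<psi> :: "'w \<Rightarrow> 'b::{banach, second_countable_topology}"
  assumes "j \<le> K" "history_measurable 0 1 \<psi>" "integrable M \<psi>"
  shows "integrable M (\<lambda>\<omega>. ipw a j \<omega> *\<^sub>R \<psi> \<omega>)" "(\<integral>\<omega>. ipw a j \<omega> *\<^sub>R \<psi> \<omega> \<partial>M) = integral\<^sup>L M \<psi>"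
proof -
  have "history_measurable (k - 1) k \<psi>" if "k \<in> {Suc 0..j}" for k
    using that by (intro history_measurable_mono[OF assms(2)]) auto
  from integral_ipw_iterate[of 0 j, OF _ assms(1) this, of a]
  show "integrable M (\<lambda>\<omega>. ipw a j \<omega> *\<^sub>R \<psi> \<omega>)" "(\<integral>\<omega>. ipw a j \<omega> *\<^sub>R \<psi> \<omega> \<partial>M) = integral\<^sup>L M \<psi>"
    using assms(3) by (simp_all add: ipw_0)
qed

end

section \<open>The bias-corrected estimating function\<close>

locale bc_ipw_model = sequential_treatment M K A L N ptrue
  for M :: "'w measure" and K :: nat and A :: "nat \<Rightarrow> 'w \<Rightarrow> bool" and L :: "nat \<Rightarrow> 'w \<Rightarrow> 'l"
    and N :: "'l measure" and ptrue :: "nat \<Rightarrow> bool \<Rightarrow> ((nat \<Rightarrow> bool) \<times> (nat \<Rightarrow> 'l)) \<Rightarrow> real" +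
  fixes Ya :: "(nat \<Rightarrow> bool) \<Rightarrow> 'w \<Rightarrow> real"
    and NZ :: "'z measure" and zf :: "'l \<Rightarrow> 'z"
    and h :: "(nat \<Rightarrow> bool) \<Rightarrow> 'z \<Rightarrow> 'th \<Rightarrow> real"
    and d :: "(nat \<Rightarrow> bool) \<Rightarrow> 'z \<Rightarrow> 'th \<Rightarrow> 'v::euclidean_space"
    and Fk :: "(nat \<Rightarrow> bool) \<Rightarrow> nat \<Rightarrow> real \<Rightarrow> ((nat \<Rightarrow> bool) \<times> (nat \<Rightarrow> 'l)) \<Rightarrow> real"
    and FZ :: "(nat \<Rightarrow> bool) \<Rightarrow> real \<Rightarrow> 'z \<Rightarrow> real"
    and \<theta>0 :: 'th
  assumes K_pos: "K \<ge> 1"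
    and measZ: "zf \<in> N \<rightarrow>\<^sub>M NZ"
    and meas_h: "\<forall>a \<theta>. (\<lambda>z. h a z \<theta>) \<in> borel_measurable NZ"
    and meas_d: "\<forall>a \<theta>. (\<lambda>z. d a z \<theta>) \<in> borel_measurable NZ"
    and Fk: "\<forall>a\<in>regimes K. \<forall>k\<in>{1..K}. cond_cdf M (hist_space N k)
                  (\<lambda>\<omega>. (abar A k \<omega>, lbar L k \<omega>)) (Ya a) (Fk a k)"
    and FZ: "\<forall>a\<in>regimes K. cond_cdf M NZ (\<lambda>\<omega>. zf (L 1 \<omega>)) (Ya a) (FZ a)"
    and d_int: "\<forall>a\<in>regimes K. integrable M (\<lambda>\<omega>. d a (zf (L 1 \<omega>)) \<theta>0)"
begin

definition threshold :: "(nat \<Rightarrow> bool) \<Rightarrow> 'w \<Rightarrow> real" where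
  "threshold a \<omega> = h a (zf (L 1 \<omega>)) \<theta>0"

definition score :: "(nat \<Rightarrow> bool) \<Rightarrow> 'w \<Rightarrow> 'v" where
  "score a \<omega> = d a (zf (L 1 \<omega>)) \<theta>0"

definition below :: "(nat \<Rightarrow> bool) \<Rightarrow> 'w \<Rightarrow> real" where
  "below a \<omega> = (if Ya a \<omega> \<le> threshold a \<omega> then 1 else 0)"

definition conf :: "(nat \<Rightarrow> bool) \<Rightarrow> nat \<Rightarrow> 'w \<Rightarrow> real" where
  "conf a k \<omega> = conf_true Fk k (threshold a \<omega>) a (lbar L k \<omega>)"

definition conf_star :: "(nat \<Rightarrow> bool) \<Rightarrow> nat \<Rightarrow> 'w \<Rightarrow> real" where
  "conf_star a k \<omega> = conf a k \<omega> * ptrue k (\<not> a k) (trunc (k - 1) a, lbar L k \<omega>)"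

lemma measurable_baseline:
  assumes "u \<in> borel_measurable NZ" "1 \<le> (k::nat)"
  shows "(\<lambda>l. u (zf (l 1))) \<in> borel_measurable (Pi\<^sub>M {1..k} (\<lambda>i. N))"
proof -
  have "1 \<in> {1..k}" using assms(2) by simp
  from measurable_component_singleton[OF this, of "\<lambda>i. N"] show ?thesis
    by (rule measurable_compose[OF measurable_compose[OF _ measZ] assms(1)])
qed

lemma history_measurable_baseline:
  assumes "u \<in> borel_measurable NZ" "1 \<le> k"
  shows "history_measurable m k (\<lambda>\<omega>. u (zf (L 1 \<omega>)))"
proof -
  have "(\<lambda>\<omega>. u (zf (lbar L k \<omega> 1))) = (\<lambda>\<omega>. u (zf (L 1 \<omega>)))"
    using assms(2) by (simp add: lbar_def)
  with history_measurable_covariates[OF measurable_baseline[OF assms]] show ?thesis by simp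
qed

lemma history_measurable_threshold: "1 \<le> k \<Longrightarrow> history_measurable m k (threshold a)"
  unfolding threshold_def[abs_def] using meas_h by (intro history_measurable_baseline) auto

lemma history_measurable_score: "1 \<le> k \<Longrightarrow> history_measurable m k (score a)"
  unfolding score_def[abs_def] using meas_d by (intro history_measurable_baseline) auto

lemma score_measurable: "score a \<in> borel_measurable M"
  using history_measurable_measurable[OF history_measurable_score[of 1 0 a]] K_pos by simp

lemma threshold_measurable: "threshold a \<in> borel_measurable M"
  using history_measurable_measurable[OF history_measurable_threshold[of 1 0 a]] K_pos by simp

lemma below_measurable:
  assumes "a \<in> regimes K"
  shows "below a \<in> borel_measurable M"
proof -
  have "Ya a \<in> borel_measurable M" using cond_cdfD(5) FZ assms by blast
  then show ?thesis unfolding below_def[abs_def] using threshold_measurable by measurable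
qed

lemma cond_version_below:
  assumes k: "k \<in> {1..K}" and a: "a \<in> regimes K"
  shows "cond_version M (hist_space N k) (\<lambda>\<omega>. (abar A k \<omega>, lbar L k \<omega>))
           (\<lambda>\<omega>. Ya a \<omega> \<le> threshold a \<omega>) (\<lambda>x. Fk a k (h a (zf (snd x 1)) \<theta>0) x)"
proof -
  have meas: "(\<lambda>x. h a (zf (snd x 1)) \<theta>0) \<in> borel_measurable (hist_space N k)"
  proof -
    have "(\<lambda>l. h a (zf (l 1)) \<theta>0) \<in> borel_measurable (Pi\<^sub>M {1..k} (\<lambda>i. N))"
      by (rule measurable_baseline) (use meas_h k in auto)
    from measurable_compose[OF measurable_snd this] show ?thesis by (simp add: hist_space_def)
  qed
  have "cond_cdf M (hist_space N k) (\<lambda>\<omega>. (abar A k \<omega>, lbar L k \<omega>)) (Ya a) (Fk a k)"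
    using Fk k a by blast
  from cond_cdf_measurable_threshold[OF prob_space this meas] show ?thesis
    using k by (simp add: threshold_def lbar_def)
qed

lemma history_measurable_cdf_fixed_treatment:
  assumes "k \<in> {1..K}" "a \<in> regimes K"
  shows "history_measurable m k (\<lambda>\<omega>. Fk a k (threshold a \<omega>) (\<beta>, lbar L k \<omega>))"
  using history_measurable_fixed_treatment[OF cond_versionD(3)[OF cond_version_below[OF assms]]]
    assms(1) by (simp add: threshold_def lbar_def)

lemma history_measurable_conf:
  "k \<in> {1..K} \<Longrightarrow> a \<in> regimes K \<Longrightarrow> history_measurable m k (conf a k)"
  unfolding conf_def[abs_def] conf_true_def
  by (intro history_measurable_diff history_measurable_cdf_fixed_treatment)

lemma history_measurable_conf_star:
  "k \<in> {1..K} \<Longrightarrow> a \<in> regimes K \<Longrightarrow> history_measurable m k (conf_star a k)"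
  unfolding conf_star_def[abs_def]
  by (intro history_measurable_mult history_measurable_conf history_measurable_propensity) auto

lemma cdf_bounds:
  assumes "k \<in> {1..K}" "a \<in> regimes K" "\<omega> \<in> space M"
  shows "0 \<le> Fk a k y (\<beta>, lbar L k \<omega>) \<and> Fk a k y (\<beta>, lbar L k \<omega>) \<le> 1"
proof -
  have "(abar A k \<omega>, lbar L k \<omega>) \<in> space (hist_space N k)"
    using measurable_space[OF measurable_history_of_le[of k k] assms(3)] assms(1) by simp
  then have "(\<beta>, lbar L k \<omega>) \<in> space (hist_space N k)"
    by (simp add: hist_space_def space_pair_measure)
  then show ?thesis by (rule cond_cdfD(2)[OF Fk[rule_format, OF assms(2,1)]])
qed

lemma abs_conf_le_1:
  "k \<in> {1..K} \<Longrightarrow> a \<in> regimes K \<Longrightarrow> \<omega> \<in> space M \<Longrightarrow> \<bar>conf a k \<omega>\<bar> \<le> 1"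
  using cdf_bounds[of k a \<omega> "threshold a \<omega>" "trunc k a"]
    cdf_bounds[of k a \<omega> "threshold a \<omega>" "(trunc k a)(k := \<not> a k)"]
  by (simp add: conf_def conf_true_def abs_le_iff)

lemma AE_abs_conf_star_le_1:
  assumes k: "k \<in> {1..K}" and a: "a \<in> regimes K"
  shows "AE \<omega> in M. ipw a K \<omega> \<noteq> 0 \<longrightarrow> \<bar>conf_star a k \<omega>\<bar> \<le> 1"
  using cond_version_AE_bounds[OF prob_space ptrue[rule_format, OF k, of "\<not> a k"]] AE_space
proof eventually_elim
  case (elim \<omega>)
  show ?case
  proof
    assume "ipw a K \<omega> \<noteq> 0"
    then have "abar A (k - 1) \<omega> = trunc (k - 1) a"
      using ipw_nonzeroD trunc_abar[of "k - 1" K A \<omega>] trunc_trunc[of "k - 1" K a] k by force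
    then have "\<bar>ptrue k (\<not> a k) (trunc (k - 1) a, lbar L k \<omega>)\<bar> \<le> 1" using elim(1) by simp
    then have "\<bar>conf a k \<omega>\<bar> * \<bar>ptrue k (\<not> a k) (trunc (k - 1) a, lbar L k \<omega>)\<bar> \<le> 1 * 1"
      using abs_conf_le_1[OF k a elim(2)] by (intro mult_mono) auto
    then show "\<bar>conf_star a k \<omega>\<bar> \<le> 1" by (simp add: conf_star_def abs_mult)
  qed
qed

lemma integrable_ipw_score:
  assumes "j \<le> K" "a \<in> regimes K" "b \<in> borel_measurable M"
    and "AE \<omega> in M. ipw a j \<omega> \<noteq> 0 \<longrightarrow> \<bar>b \<omega>\<bar> \<le> 1"
  shows "integrable M (\<lambda>\<omega>. ipw a j \<omega> *\<^sub>R (b \<omega> *\<^sub>R score a \<omega>))"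
proof (rule integrable_scaleR_bounded_factor)
  show "integrable M (\<lambda>\<omega>. ipw a j \<omega> *\<^sub>R score a \<omega>)"
    using d_int assms(1,2) history_measurable_score[of 1 0 a]
    by (intro ipw_baseline(1)) (auto simp: score_def[abs_def])
qed (use assms ipw_measurable score_measurable in auto)

lemma integral_below_eq_cdf:
  fixes \<psi> :: "'w \<Rightarrow> 'b::{banach, second_countable_topology}"
  assumes k: "k \<in> {1..K}" and a: "a \<in> regimes K" and \<psi>: "history_measurable k k \<psi>"
  shows "(\<integral>\<omega>. below a \<omega> *\<^sub>R \<psi> \<omega> \<partial>M)
       = (\<integral>\<omega>. Fk a k (threshold a \<omega>) (abar A k \<omega>, lbar L k \<omega>) *\<^sub>R \<psi> \<omega> \<partial>M)"
proof -
  obtain f where f: "f \<in> borel_measurable (hist_space N k)"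
    "\<forall>\<omega>\<in>space M. \<psi> \<omega> = f (abar A k \<omega>, lbar L k \<omega>)"
    using \<psi> unfolding history_measurable_def by blast
  have "(\<integral>\<omega>. below a \<omega> *\<^sub>R \<psi> \<omega> \<partial>M)
      = (\<integral>\<omega>. indicator {\<omega>\<in>space M. Ya a \<omega> \<le> threshold a \<omega>} \<omega> *\<^sub>R f (abar A k \<omega>, lbar L k \<omega>) \<partial>M)"
    using f(2) by (intro Bochner_Integration.integral_cong) (auto simp: below_def indicator_def)
  also have "\<dots> = (\<integral>\<omega>. Fk a k (h a (zf (snd (abar A k \<omega>, lbar L k \<omega>) 1)) \<theta>0) (abar A k \<omega>, lbar L k \<omega>)
      *\<^sub>R f (abar A k \<omega>, lbar L k \<omega>) \<partial>M)"
    by (rule cond_version_integral(2)[OF prob_space cond_version_below[OF k a] f(1)])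
  also have "\<dots> = (\<integral>\<omega>. Fk a k (threshold a \<omega>) (abar A k \<omega>, lbar L k \<omega>) *\<^sub>R \<psi> \<omega> \<partial>M)"
    using f(2) k by (intro Bochner_Integration.integral_cong) (auto simp: threshold_def lbar_def)
  finally show ?thesis .
qed

lemma cdf_history_decompose:
  assumes "1 \<le> k" "abar A (k - 1) \<omega> = trunc (k - 1) a"
  shows "Fk a k (threshold a \<omega>) (abar A k \<omega>, lbar L k \<omega>)
       = Fk a k (threshold a \<omega>) (trunc k a, lbar L k \<omega>) - (if A k \<omega> = a k then 0 else conf a k \<omega>)"
proof (cases "A k \<omega> = a k")
  case True
  then have "abar A k \<omega> = trunc k a" using assms(2) by (simp add: abar_eq_trunc_iff[OF assms(1)])
  then show ?thesis using True by simp
next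
  case False
  then have flip: "abar A k \<omega> = (trunc k a)(k := \<not> a k)" using abar_eq_flip[OF assms] by simp
  have "(if A k \<omega> = a k then 0 else conf a k \<omega>) = conf a k \<omega>" using False by simp
  then show ?thesis unfolding flip conf_def conf_true_def by simp
qed

lemma integral_ipw_flip_conf:
  assumes k: "k \<in> {1..K}" and a: "a \<in> regimes K"
  shows "(\<integral>\<omega>. ipw a (k - 1) \<omega> *\<^sub>R ((if A k \<omega> = a k then 0 else conf a k \<omega>) *\<^sub>R score a \<omega>) \<partial>M)
       = (\<integral>\<omega>. ipw a k \<omega> *\<^sub>R (conf_star a k \<omega> *\<^sub>R score a \<omega>) \<partial>M)"
proof -
  define \<psi> where "\<psi> \<omega> = ipw a (k - 1) \<omega> *\<^sub>R (conf a k \<omega> *\<^sub>R score a \<omega>)" for \<omega>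
  have \<psi>: "history_measurable (k - 1) k \<psi>"
    unfolding \<psi>_def[abs_def] using k
    by (intro history_measurable_scaleR history_measurable_ipw history_measurable_conf[OF k a]
        history_measurable_score) auto
  have "(\<integral>\<omega>. ipw a (k - 1) \<omega> *\<^sub>R ((if A k \<omega> = a k then 0 else conf a k \<omega>) *\<^sub>R score a \<omega>) \<partial>M)
      = (\<integral>\<omega>. indicator {\<omega>\<in>space M. A k \<omega> = (\<not> a k)} \<omega> *\<^sub>R \<psi> \<omega> \<partial>M)"
    by (intro Bochner_Integration.integral_cong) (auto simp: \<psi>_def indicator_def)
  also have "\<dots> = (\<integral>\<omega>. ptrue k (\<not> a k) (abar A (k - 1) \<omega>, lbar L k \<omega>) *\<^sub>R \<psi> \<omega> \<partial>M)"
    by (rule integral_treatment_indicator(2)[OF k \<psi>])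
  also have "\<dots> = (\<integral>\<omega>. ipw a (k - 1) \<omega> *\<^sub>R (conf_star a k \<omega> *\<^sub>R score a \<omega>) \<partial>M)"
  proof (intro Bochner_Integration.integral_cong refl)
    fix \<omega>
    show "ptrue k (\<not> a k) (abar A (k - 1) \<omega>, lbar L k \<omega>) *\<^sub>R \<psi> \<omega>
        = ipw a (k - 1) \<omega> *\<^sub>R (conf_star a k \<omega> *\<^sub>R score a \<omega>)"
    proof (cases "ipw a (k - 1) \<omega> = 0")
      case False
      then have "abar A (k - 1) \<omega> = trunc (k - 1) a" by (rule ipw_nonzeroD)
      then show ?thesis by (simp add: \<psi>_def conf_star_def)
    qed (simp add: \<psi>_def)
  qed
  also have "\<dots> = (\<integral>\<omega>. ipw a k \<omega> *\<^sub>R (conf_star a k \<omega> *\<^sub>R score a \<omega>) \<partial>M)"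
    using k by (intro integral_ipw_step(2)[symmetric] history_measurable_scaleR
        history_measurable_conf_star[OF k a] history_measurable_score) auto
  finally show ?thesis .
qed

lemma integral_ipw_below_eq_regime_cdf:
  assumes k: "k \<in> {1..K}" and a: "a \<in> regimes K"
  shows "(\<integral>\<omega>. ipw a k \<omega> *\<^sub>R (below a \<omega> *\<^sub>R score a \<omega>) \<partial>M)
       = (\<integral>\<omega>. ipw a k \<omega> *\<^sub>R (Fk a k (threshold a \<omega>) (trunc k a, lbar L k \<omega>) *\<^sub>R score a \<omega>) \<partial>M)"
proof -
  have "(\<integral>\<omega>. ipw a k \<omega> *\<^sub>R (below a \<omega> *\<^sub>R score a \<omega>) \<partial>M)
      = (\<integral>\<omega>. below a \<omega> *\<^sub>R (ipw a k \<omega> *\<^sub>R score a \<omega>) \<partial>M)"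
    by (simp add: mult.commute)
  also have "\<dots> = (\<integral>\<omega>. Fk a k (threshold a \<omega>) (abar A k \<omega>, lbar L k \<omega>) *\<^sub>R (ipw a k \<omega> *\<^sub>R score a \<omega>) \<partial>M)"
    using k by (intro integral_below_eq_cdf[OF k a] history_measurable_scaleR history_measurable_ipw
        history_measurable_score) auto
  also have "\<dots> = (\<integral>\<omega>. ipw a k \<omega> *\<^sub>R (Fk a k (threshold a \<omega>) (trunc k a, lbar L k \<omega>) *\<^sub>R score a \<omega>) \<partial>M)"
    by (intro Bochner_Integration.integral_cong refl) (auto dest: ipw_nonzeroD)
  finally show ?thesis .
qed

lemma integral_ipw_below_decompose:
  assumes k: "k \<in> {1..K}" and a: "a \<in> regimes K"
  shows "(\<integral>\<omega>. ipw a (k - 1) \<omega> *\<^sub>R (below a \<omega> *\<^sub>R score a \<omega>) \<partial>M)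
       = (\<integral>\<omega>. ipw a (k - 1) \<omega> *\<^sub>R (Fk a k (threshold a \<omega>) (trunc k a, lbar L k \<omega>) *\<^sub>R score a \<omega>) \<partial>M)
         - (\<integral>\<omega>. ipw a (k - 1) \<omega> *\<^sub>R ((if A k \<omega> = a k then 0 else conf a k \<omega>) *\<^sub>R score a \<omega>) \<partial>M)"
proof -
  have le: "1 \<le> k" "k - 1 \<le> k" "k - 1 \<le> K" "k \<le> K" using k by auto
  define F\<^sub>a where "F\<^sub>a \<omega> = Fk a k (threshold a \<omega>) (trunc k a, lbar L k \<omega>)" for \<omega>
  define flip where "flip \<omega> = (if A k \<omega> = a k then 0 else conf a k \<omega>)" for \<omega>
  have F\<^sub>a_meas: "F\<^sub>a \<in> borel_measurable M"
    using history_measurable_measurable[OF history_measurable_cdf_fixed_treatment[OF k a] le(2,4)]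
    by (simp add: F\<^sub>a_def[abs_def])
  have "A k \<in> M \<rightarrow>\<^sub>M count_space UNIV" using measA k by blast
  then have flip_meas: "flip \<in> borel_measurable M"
    using history_measurable_measurable[OF history_measurable_conf[OF k a, of k] order_refl le(4)]
    unfolding flip_def[abs_def] by measurable
  have "(\<integral>\<omega>. ipw a (k - 1) \<omega> *\<^sub>R (below a \<omega> *\<^sub>R score a \<omega>) \<partial>M)
      = (\<integral>\<omega>. below a \<omega> *\<^sub>R (ipw a (k - 1) \<omega> *\<^sub>R score a \<omega>) \<partial>M)"
    by (simp add: mult.commute)
  also have "\<dots> = (\<integral>\<omega>. Fk a k (threshold a \<omega>) (abar A k \<omega>, lbar L k \<omega>)
                       *\<^sub>R (ipw a (k - 1) \<omega> *\<^sub>R score a \<omega>) \<partial>M)"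
    using le by (intro integral_below_eq_cdf[OF k a] history_measurable_scaleR history_measurable_ipw
        history_measurable_score) auto
  also have "\<dots> = (\<integral>\<omega>. ipw a (k - 1) \<omega> *\<^sub>R (F\<^sub>a \<omega> *\<^sub>R score a \<omega>)
                       - ipw a (k - 1) \<omega> *\<^sub>R (flip \<omega> *\<^sub>R score a \<omega>) \<partial>M)"
  proof (intro Bochner_Integration.integral_cong refl)
    fix \<omega>
    show "Fk a k (threshold a \<omega>) (abar A k \<omega>, lbar L k \<omega>) *\<^sub>R (ipw a (k - 1) \<omega> *\<^sub>R score a \<omega>)
        = ipw a (k - 1) \<omega> *\<^sub>R (F\<^sub>a \<omega> *\<^sub>R score a \<omega>) - ipw a (k - 1) \<omega> *\<^sub>R (flip \<omega> *\<^sub>R score a \<omega>)"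
    proof (cases "ipw a (k - 1) \<omega> = 0")
      case False
      then have F: "Fk a k (threshold a \<omega>) (abar A k \<omega>, lbar L k \<omega>) = F\<^sub>a \<omega> - flip \<omega>"
        unfolding F\<^sub>a_def flip_def by (intro cdf_history_decompose le ipw_nonzeroD)
      show ?thesis unfolding F by (simp add: left_diff_distrib mult.commute scaleR_left_diff_distrib)
    qed simp
  qed
  also have "\<dots> = (\<integral>\<omega>. ipw a (k - 1) \<omega> *\<^sub>R (F\<^sub>a \<omega> *\<^sub>R score a \<omega>) \<partial>M)
                  - (\<integral>\<omega>. ipw a (k - 1) \<omega> *\<^sub>R (flip \<omega> *\<^sub>R score a \<omega>) \<partial>M)"
  proof (intro Bochner_Integration.integral_diff integrable_ipw_score[OF le(3) a] AE_I2 impI)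
    show "\<bar>F\<^sub>a \<omega>\<bar> \<le> 1" if "\<omega> \<in> space M" for \<omega>
      using cdf_bounds[OF k a that] by (simp add: F\<^sub>a_def)
    show "\<bar>flip \<omega>\<bar> \<le> 1" if "\<omega> \<in> space M" for \<omega>
      using abs_conf_le_1[OF k a that] by (simp add: flip_def)
  qed (fact F\<^sub>a_meas flip_meas)+
  finally show ?thesis unfolding F\<^sub>a_def flip_def .
qed

lemma integral_ipw_below_step:
  assumes k: "k \<in> {1..K}" and a: "a \<in> regimes K"
  shows "(\<integral>\<omega>. ipw a (k - 1) \<omega> *\<^sub>R (below a \<omega> *\<^sub>R score a \<omega>) \<partial>M)
       = (\<integral>\<omega>. ipw a k \<omega> *\<^sub>R (below a \<omega> *\<^sub>R score a \<omega>) \<partial>M)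
         - (\<integral>\<omega>. ipw a k \<omega> *\<^sub>R (conf_star a k \<omega> *\<^sub>R score a \<omega>) \<partial>M)"
proof -
  have "(\<integral>\<omega>. ipw a (k - 1) \<omega> *\<^sub>R (Fk a k (threshold a \<omega>) (trunc k a, lbar L k \<omega>) *\<^sub>R score a \<omega>) \<partial>M)
      = (\<integral>\<omega>. ipw a k \<omega> *\<^sub>R (Fk a k (threshold a \<omega>) (trunc k a, lbar L k \<omega>) *\<^sub>R score a \<omega>) \<partial>M)"
    using k by (intro integral_ipw_step(2)[OF k, symmetric] history_measurable_scaleR
        history_measurable_cdf_fixed_treatment[OF k a] history_measurable_score) auto
  then show ?thesis
    unfolding integral_ipw_below_decompose[OF k a] integral_ipw_flip_conf[OF k a]
      integral_ipw_below_eq_regime_cdf[OF k a] by simp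
qed

lemma integral_below_telescope:
  assumes a: "a \<in> regimes K" and "j \<le> K"
  shows "(\<integral>\<omega>. below a \<omega> *\<^sub>R score a \<omega> \<partial>M)
       = (\<integral>\<omega>. ipw a j \<omega> *\<^sub>R (below a \<omega> *\<^sub>R score a \<omega>) \<partial>M)
         - (\<Sum>k\<in>{1..j}. \<integral>\<omega>. ipw a k \<omega> *\<^sub>R (conf_star a k \<omega> *\<^sub>R score a \<omega>) \<partial>M)"
  using \<open>j \<le> K\<close>
proof (induction j)
  case (Suc j)
  then have "Suc j \<in> {1..K}" by simp
  from integral_ipw_below_step[OF this a] Suc show ?case by (simp add: sum.nat_ivl_Suc')
qed (simp add: ipw_0)

lemma integral_ipw_conf_star:
  assumes k: "k \<in> {1..K}" and a: "a \<in> regimes K"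
  shows "(\<integral>\<omega>. ipw a K \<omega> *\<^sub>R (conf_star a k \<omega> *\<^sub>R score a \<omega>) \<partial>M)
       = (\<integral>\<omega>. ipw a k \<omega> *\<^sub>R (conf_star a k \<omega> *\<^sub>R score a \<omega>) \<partial>M)"
proof (rule integral_ipw_iterate(2))
  have "history_measurable 0 k (\<lambda>\<omega>. conf_star a k \<omega> *\<^sub>R score a \<omega>)"
    using k by (intro history_measurable_scaleR history_measurable_conf_star[OF k a]
        history_measurable_score) auto
  then show "history_measurable (k' - 1) k' (\<lambda>\<omega>. conf_star a k \<omega> *\<^sub>R score a \<omega>)"
    if "k' \<in> {Suc k..K}" for k'
    using that by (elim history_measurable_mono) auto
qed (use k in auto)

lemma below_baseline_cdf:
  assumes a: "a \<in> regimes K"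
  shows "integrable M (\<lambda>\<omega>. FZ a (threshold a \<omega>) (zf (L 1 \<omega>)) *\<^sub>R score a \<omega>)"
    and "(\<integral>\<omega>. below a \<omega> *\<^sub>R score a \<omega> \<partial>M) = (\<integral>\<omega>. FZ a (threshold a \<omega>) (zf (L 1 \<omega>)) *\<^sub>R score a \<omega> \<partial>M)"
proof -
  have cv: "cond_version M NZ (\<lambda>\<omega>. zf (L 1 \<omega>))
      (\<lambda>\<omega>. Ya a \<omega> \<le> h a (zf (L 1 \<omega>)) \<theta>0) (\<lambda>z. FZ a (h a z \<theta>0) z)"
    using FZ a meas_h
    by (intro cond_cdf_measurable_threshold[OF prob_space, where \<phi>="\<lambda>z. h a z \<theta>0"]) auto
  have below: "indicator {\<omega>\<in>space M. Ya a \<omega> \<le> h a (zf (L 1 \<omega>)) \<theta>0} \<omega> *\<^sub>R d a (zf (L 1 \<omega>)) \<theta>0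
      = below a \<omega> *\<^sub>R score a \<omega>" if "\<omega> \<in> space M" for \<omega>
    using that by (simp add: below_def threshold_def score_def indicator_def)
  have meas_d': "(\<lambda>z. d a z \<theta>0) \<in> borel_measurable NZ" using meas_d by blast
  have int_below: "integrable M (\<lambda>\<omega>. below a \<omega> *\<^sub>R score a \<omega>)"
    using integrable_ipw_score[of 0 a "below a"] a below_measurable by (simp add: ipw_0 below_def)
  have "integrable M (\<lambda>\<omega>. below a \<omega> *\<^sub>R score a \<omega>)
      \<longleftrightarrow> integrable M (\<lambda>\<omega>. indicator {\<omega>\<in>space M. Ya a \<omega> \<le> h a (zf (L 1 \<omega>)) \<theta>0} \<omega>
                          *\<^sub>R d a (zf (L 1 \<omega>)) \<theta>0)"
    using below by (intro Bochner_Integration.integrable_cong) auto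
  also have "\<dots> \<longleftrightarrow> integrable M (\<lambda>\<omega>. FZ a (threshold a \<omega>) (zf (L 1 \<omega>)) *\<^sub>R score a \<omega>)"
    unfolding threshold_def score_def by (rule cond_version_integral(1)[OF prob_space cv meas_d'])
  finally have "integrable M (\<lambda>\<omega>. below a \<omega> *\<^sub>R score a \<omega>)
      \<longleftrightarrow> integrable M (\<lambda>\<omega>. FZ a (threshold a \<omega>) (zf (L 1 \<omega>)) *\<^sub>R score a \<omega>)" .
  with int_below show "integrable M (\<lambda>\<omega>. FZ a (threshold a \<omega>) (zf (L 1 \<omega>)) *\<^sub>R score a \<omega>)" by simp
  have "(\<integral>\<omega>. below a \<omega> *\<^sub>R score a \<omega> \<partial>M)
      = (\<integral>\<omega>. indicator {\<omega>\<in>space M. Ya a \<omega> \<le> h a (zf (L 1 \<omega>)) \<theta>0} \<omega> *\<^sub>R d a (zf (L 1 \<omega>)) \<theta>0 \<partial>M)"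
    using below by (intro Bochner_Integration.integral_cong) auto
  also have "\<dots> = (\<integral>\<omega>. FZ a (threshold a \<omega>) (zf (L 1 \<omega>)) *\<^sub>R score a \<omega> \<partial>M)"
    unfolding threshold_def score_def by (rule cond_version_integral(2)[OF prob_space cv meas_d'])
  finally show "(\<integral>\<omega>. below a \<omega> *\<^sub>R score a \<omega> \<partial>M)
      = (\<integral>\<omega>. FZ a (threshold a \<omega>) (zf (L 1 \<omega>)) *\<^sub>R score a \<omega> \<partial>M)" .
qed

definition ipw_residual :: "real \<Rightarrow> (nat \<Rightarrow> bool) \<Rightarrow> 'w \<Rightarrow> 'v" where
  "ipw_residual q a \<omega> = ipw a K \<omega> *\<^sub>R ((below a \<omega> - (\<Sum>k\<in>{1..K}. conf_star a k \<omega>) - q) *\<^sub>R score a \<omega>)"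

lemma ipw_residual_integral:
  assumes a: "a \<in> regimes K"
  shows "integrable M (ipw_residual q a)"
    and "integral\<^sup>L M (ipw_residual q a) = (\<integral>\<omega>. (FZ a (threshold a \<omega>) (zf (L 1 \<omega>)) - q) *\<^sub>R score a \<omega> \<partial>M)"
proof -
  have int_below: "integrable M (\<lambda>\<omega>. ipw a K \<omega> *\<^sub>R (below a \<omega> *\<^sub>R score a \<omega>))"
    by (rule integrable_ipw_score[OF order_refl a below_measurable[OF a]]) (auto simp: below_def)
  have int_conf: "integrable M (\<lambda>\<omega>. ipw a K \<omega> *\<^sub>R (conf_star a k \<omega> *\<^sub>R score a \<omega>))"
    if k: "k \<in> {1..K}" for k
    using a AE_abs_conf_star_le_1[OF k a] k
      history_measurable_measurable[OF history_measurable_conf_star[OF k a]]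
    by (intro integrable_ipw_score) auto
  have int_score: "integrable M (score a)"
    using d_int a by (simp add: score_def[abs_def])
  have base: "integrable M (\<lambda>\<omega>. ipw a K \<omega> *\<^sub>R score a \<omega>)"
    "(\<integral>\<omega>. ipw a K \<omega> *\<^sub>R score a \<omega> \<partial>M) = integral\<^sup>L M (score a)"
    using ipw_baseline[OF order_refl history_measurable_score int_score] by simp_all
  have split: "ipw_residual q a = (\<lambda>\<omega>. ipw a K \<omega> *\<^sub>R (below a \<omega> *\<^sub>R score a \<omega>)
      - (\<Sum>k\<in>{1..K}. ipw a K \<omega> *\<^sub>R (conf_star a k \<omega> *\<^sub>R score a \<omega>)) - q *\<^sub>R (ipw a K \<omega> *\<^sub>R score a \<omega>))"
    by (simp add: ipw_residual_def fun_eq_iff scaleR_left_diff_distrib scaleR_right_diff_distrib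
        scaleR_sum_left scaleR_sum_right)
  have int_sum: "integrable M (\<lambda>\<omega>. \<Sum>k\<in>{1..K}. ipw a K \<omega> *\<^sub>R (conf_star a k \<omega> *\<^sub>R score a \<omega>))"
    using int_conf by (intro Bochner_Integration.integrable_sum) auto
  have int_q: "integrable M (\<lambda>\<omega>. q *\<^sub>R (ipw a K \<omega> *\<^sub>R score a \<omega>))"
    using base(1) by (rule integrable_scaleR_right)
  show "integrable M (ipw_residual q a)"
    unfolding split using int_below int_sum int_q by (intro Bochner_Integration.integrable_diff)
  have "integral\<^sup>L M (ipw_residual q a)
      = (\<integral>\<omega>. ipw a K \<omega> *\<^sub>R (below a \<omega> *\<^sub>R score a \<omega>) \<partial>M)
        - (\<Sum>k\<in>{1..K}. \<integral>\<omega>. ipw a K \<omega> *\<^sub>R (conf_star a k \<omega> *\<^sub>R score a \<omega>) \<partial>M)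
        - q *\<^sub>R (\<integral>\<omega>. ipw a K \<omega> *\<^sub>R score a \<omega> \<partial>M)"
    unfolding split
    by (simp only: integral_scaleR_right Bochner_Integration.integral_sum[OF int_conf]
        Bochner_Integration.integral_diff[OF int_below int_sum]
        Bochner_Integration.integral_diff[OF Bochner_Integration.integrable_diff[OF int_below int_sum] int_q])
  also have "\<dots> = (\<integral>\<omega>. below a \<omega> *\<^sub>R score a \<omega> \<partial>M) - q *\<^sub>R integral\<^sup>L M (score a)"
    using integral_below_telescope[OF a order_refl] integral_ipw_conf_star[OF _ a] base(2)
    by simp
  also have "\<dots> = (\<integral>\<omega>. (FZ a (threshold a \<omega>) (zf (L 1 \<omega>)) - q) *\<^sub>R score a \<omega> \<partial>M)"
    using below_baseline_cdf[OF a] int_score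
    by (simp add: scaleR_left_diff_distrib)
  finally show "integral\<^sup>L M (ipw_residual q a)
      = (\<integral>\<omega>. (FZ a (threshold a \<omega>) (zf (L 1 \<omega>)) - q) *\<^sub>R score a \<omega> \<partial>M)" .
qed

lemma integral_sum_ipw_residual:
  shows "integrable M (\<lambda>\<omega>. \<Sum>a\<in>regimes K. ipw_residual q a \<omega>)"
    and "(\<integral>\<omega>. (\<Sum>a\<in>regimes K. ipw_residual q a \<omega>) \<partial>M)
       = (\<integral>\<omega>. (\<Sum>a\<in>regimes K. (FZ a (threshold a \<omega>) (zf (L 1 \<omega>)) - q) *\<^sub>R score a \<omega>) \<partial>M)"
proof -
  have "integrable M (\<lambda>\<omega>. (FZ a (threshold a \<omega>) (zf (L 1 \<omega>)) - q) *\<^sub>R score a \<omega>)"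
    if "a \<in> regimes K" for a
    using below_baseline_cdf(1)[OF that] d_int that
    by (simp add: scaleR_left_diff_distrib score_def[abs_def])
  then show "integrable M (\<lambda>\<omega>. \<Sum>a\<in>regimes K. ipw_residual q a \<omega>)"
    and "(\<integral>\<omega>. (\<Sum>a\<in>regimes K. ipw_residual q a \<omega>) \<partial>M)
       = (\<integral>\<omega>. (\<Sum>a\<in>regimes K. (FZ a (threshold a \<omega>) (zf (L 1 \<omega>)) - q) *\<^sub>R score a \<omega>) \<partial>M)"
    using ipw_residual_integral by (simp_all add: Bochner_Integration.integral_sum)
qed

lemma U_BCIPW_eq_sum_ipw_residual:
  assumes A1: "\<forall>a\<in>regimes K. \<forall>\<omega>\<in>space M. abar A K \<omega> = a \<longrightarrow> Ya a \<omega> = Y \<omega>"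
    and pi_correct: "\<forall>k\<in>{1..K}. \<forall>a l. \<pi> k a l (\<alpha>0 k) = ptrue k (a k) (trunc (k - 1) a, l)"
    and c_correct: "\<forall>k\<in>{1..K}. \<forall>y. \<forall>a\<in>regimes K. \<forall>l. cw k y a l (\<gamma> k) = conf_true Fk k y a l"
    and \<omega>: "\<omega> \<in> space M"
  shows "U_BCIPW K A L Y zf h d \<pi> cw \<gamma> q \<theta>0 \<alpha>0 \<omega> = (\<Sum>a\<in>regimes K. ipw_residual q a \<omega>)"
proof -
  define a where "a = abar A K \<omega>"
  have a: "a \<in> regimes K" unfolding a_def by (rule abar_in_regimes)
  have hist: "abar A k \<omega> = trunc k a" if "k \<le> K" for k
    unfolding a_def using trunc_abar[OF that] by (rule sym)
  have A_k: "A k \<omega> = a k" if "k \<in> {1..K}" for k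
    using that by (simp add: a_def abar_def)
  have "(\<Prod>k\<in>{1..K}. \<pi> k (abar A k \<omega>) (lbar L k \<omega>) (\<alpha>0 k)) = propensity_prod a K \<omega>"
    unfolding propensity_prod_def
    using pi_correct A_k hist trunc_trunc by (intro prod.cong refl) (simp add: trunc_def)
  then have ipw_a: "ipw a K \<omega> = 1 / (\<Prod>k\<in>{1..K}. \<pi> k (abar A k \<omega>) (lbar L k \<omega>) (\<alpha>0 k))"
    by (simp add: ipw_def hist)
  have "(\<Sum>k\<in>{1..K}. cw k (h a (zf (L 1 \<omega>)) \<theta>0) a (lbar L k \<omega>) (\<gamma> k)
          * \<pi> k ((abar A k \<omega>)(k := \<not> A k \<omega>)) (lbar L k \<omega>) (\<alpha>0 k))
      = (\<Sum>k\<in>{1..K}. conf_star a k \<omega>)"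
    using pi_correct c_correct a A_k hist
    by (intro sum.cong refl) (simp add: conf_star_def conf_def threshold_def trunc_fun_upd trunc_trunc)
  moreover have "Y \<omega> = Ya a \<omega>" using A1 a \<omega> by (simp add: a_def)
  ultimately have "U_BCIPW K A L Y zf h d \<pi> cw \<gamma> q \<theta>0 \<alpha>0 \<omega> = ipw_residual q a \<omega>"
    unfolding U_BCIPW_def Let_def ipw_residual_def a_def[symmetric] ipw_a
    by (simp add: below_def threshold_def score_def)
  also have "\<dots> = (\<Sum>a'\<in>regimes K. ipw_residual q a' \<omega>)"
  proof -
    have "ipw a' K \<omega> = 0" if "a' \<in> regimes K - {a}" for a'
      using that hist[of K] trunc_regimes[of a' K] trunc_regimes[OF a] by (auto simp: ipw_def)
    then have "ipw_residual q a' \<omega> = 0" if "a' \<in> regimes K - {a}" for a'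
      using that by (simp add: ipw_residual_def)
    then have "(\<Sum>a'\<in>regimes K - {a}. ipw_residual q a' \<omega>) = 0" by (intro sum.neutral) blast
    with sum.remove[OF finite_regimes a, of "\<lambda>a'. ipw_residual q a' \<omega>"] show ?thesis by simp
  qed
  finally show ?thesis .
qed

end

theorem lemma17:
  fixes M :: "'w measure" and K :: nat
    and A :: "nat \<Rightarrow> 'w \<Rightarrow> bool" and L :: "nat \<Rightarrow> 'w \<Rightarrow> 'l" and N :: "'l measure"
    and Y :: "'w \<Rightarrow> real" and Ya :: "(nat \<Rightarrow> bool) \<Rightarrow> 'w \<Rightarrow> real"
    and ymin ymax :: real
    and NZ :: "'z measure" and zf :: "'l \<Rightarrow> 'z"
    and h :: "(nat \<Rightarrow> bool) \<Rightarrow> 'z \<Rightarrow> 'th \<Rightarrow> real"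
    and d :: "(nat \<Rightarrow> bool) \<Rightarrow> 'z \<Rightarrow> 'th \<Rightarrow> 'v::euclidean_space"
    and \<pi> :: "nat \<Rightarrow> (nat \<Rightarrow> bool) \<Rightarrow> (nat \<Rightarrow> 'l) \<Rightarrow> 'p \<Rightarrow> real" and \<alpha>0 :: "nat \<Rightarrow> 'p"
    and ptrue :: "nat \<Rightarrow> bool \<Rightarrow> ((nat \<Rightarrow> bool) \<times> (nat \<Rightarrow> 'l)) \<Rightarrow> real"
    and Fk :: "(nat \<Rightarrow> bool) \<Rightarrow> nat \<Rightarrow> real \<Rightarrow> ((nat \<Rightarrow> bool) \<times> (nat \<Rightarrow> 'l)) \<Rightarrow> real"
    and FZ :: "(nat \<Rightarrow> bool) \<Rightarrow> real \<Rightarrow> 'z \<Rightarrow> real"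
    and cw :: "nat \<Rightarrow> real \<Rightarrow> (nat \<Rightarrow> bool) \<Rightarrow> (nat \<Rightarrow> 'l) \<Rightarrow> 'g \<Rightarrow> real" and \<gamma> :: "nat \<Rightarrow> 'g"
    and q :: real and \<theta>0 :: 'th
  assumes P: "prob_space M"
    and K: "K \<ge> 1"
    and measA: "\<forall>k\<in>{1..K}. A k \<in> measurable M (count_space UNIV)"
    and measL: "\<forall>k\<in>{1..K}. L k \<in> measurable M N"
    and measY: "Y \<in> borel_measurable M"
    and measYa: "\<forall>a\<in>regimes K. Ya a \<in> borel_measurable M"
    and Ya_cont: "\<forall>a\<in>regimes K. (\<forall>\<omega>\<in>space M. Ya a \<omega> \<in> {ymin..ymax})
                     \<and> (\<forall>y. measure M {\<omega>\<in>space M. Ya a \<omega> = y} = 0)"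
    and measZ: "zf \<in> measurable N NZ"
    and meas_h: "\<forall>a \<theta>. (\<lambda>z. h a z \<theta>) \<in> borel_measurable NZ"
    and meas_d: "\<forall>a \<theta>. (\<lambda>z. d a z \<theta>) \<in> borel_measurable NZ"
    and A1: "\<forall>a\<in>regimes K. \<forall>\<omega>\<in>space M. abar A K \<omega> = a \<longrightarrow> Ya a \<omega> = Y \<omega>"
    and ptrue: "\<forall>k\<in>{1..K}. \<forall>b. cond_version M (hist_space N k)
                  (\<lambda>\<omega>. (abar A (k - 1) \<omega>, lbar L k \<omega>)) (\<lambda>\<omega>. A k \<omega> = b) (ptrue k b)"
    and A3: "\<forall>k\<in>{1..K}. AE \<omega> in M. \<forall>b. ptrue k b (abar A (k - 1) \<omega>, lbar L k \<omega>) > 0"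
    and pi_correct: "\<forall>k\<in>{1..K}. \<forall>a l. \<pi> k a l (\<alpha>0 k) = ptrue k (a k) (trunc (k - 1) a, l)"
    and Fk: "\<forall>a\<in>regimes K. \<forall>k\<in>{1..K}. cond_cdf M (hist_space N k)
                  (\<lambda>\<omega>. (abar A k \<omega>, lbar L k \<omega>)) (Ya a) (Fk a k)"
    and c_correct: "\<forall>k\<in>{1..K}. \<forall>y. \<forall>a\<in>regimes K. \<forall>l. cw k y a l (\<gamma> k) = conf_true Fk k y a l"
    and FZ: "\<forall>a\<in>regimes K. cond_cdf M NZ (\<lambda>\<omega>. zf (L 1 \<omega>)) (Ya a) (FZ a)"
    and A4: "\<forall>a\<in>regimes K. \<forall>z\<in>space NZ. \<exists>!y. FZ a y z = q"
    and d_int: "\<forall>a\<in>regimes K. integrable M (\<lambda>\<omega>. d a (zf (L 1 \<omega>)) \<theta>0)"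
    and theta0: "(\<integral>\<omega>. (\<Sum>a\<in>regimes K. (FZ a (h a (zf (L 1 \<omega>)) \<theta>0) (zf (L 1 \<omega>)) - q)
                       *\<^sub>R d a (zf (L 1 \<omega>)) \<theta>0) \<partial>M) = 0"
  shows "integrable M (U_BCIPW K A L Y zf h d \<pi> cw \<gamma> q \<theta>0 \<alpha>0)
         \<and> (\<integral>\<omega>. U_BCIPW K A L Y zf h d \<pi> cw \<gamma> q \<theta>0 \<alpha>0 \<omega> \<partial>M) = 0"
proof -
  interpret bc_ipw_model M K A L N ptrue Ya NZ zf h d Fk FZ \<theta>0
    by (intro bc_ipw_model.intro sequential_treatment.intro bc_ipw_model_axioms.intro) fact+
  have U: "U_BCIPW K A L Y zf h d \<pi> cw \<gamma> q \<theta>0 \<alpha>0 \<omega> = (\<Sum>a\<in>regimes K. ipw_residual q a \<omega>)"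
    if "\<omega> \<in> space M" for \<omega>
    by (rule U_BCIPW_eq_sum_ipw_residual) (fact A1 pi_correct c_correct that)+
  have "(\<integral>\<omega>. (\<Sum>a\<in>regimes K. ipw_residual q a \<omega>) \<partial>M) = 0"
    using theta0 by (simp add: integral_sum_ipw_residual(2) threshold_def score_def)
  with integral_sum_ipw_residual(1) show ?thesis
    using U by (simp cong: Bochner_Integration.integrable_cong Bochner_Integration.integral_cong)
qed

end
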